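(* Setting: $\mathcal{G}$ is a connected undirected graph with nodes $\mathcal{V}=\{1,\dots,n\}$, edges $\{1,\dots,m\}$ and incidence matrix $B$; $p\ge1$, $E=\begin{bmatrix} I_{p}\\ \mathbf{0}_{(n-p)\times p}\end{bmatrix}$, $\mathcal{V}_e=\{1,\dots,p\}$ is a zero forcing set for $\mathcal{G}$. $T_x,T_\mu,T_\theta,T_\phi$ are diagonal with strictly positive diagonal entries; $d\in\mathbb{R}^n$ constant; $h(x)=(h_1(x_1),\dots,h_n(x_n))^T$ with $h_i$ continuously differentiable and strictly increasing; $\overline y\in\mathbb{R}^n$ with $\overline y_i\in\mathcal{R}(h_i)$, and $\overline x$ is the vector with $h(\overline x)=\overline y$. $Q=\operatorname{diag}(q_1,\dots,q_p)$, $q_i>0$, $r\in\mathbb{R}^p$; $L^{com}$ is the Laplacian of a balanced, strongly connected weighted directed graph on $\{1,\dots,p\}$. $B_c\in\mathbb{R}^{n\times l}$ is the incidence matrix of a (not necessarily connected) graph on $\mathcal{V}$; $\mathcal{V}_c=\{c_1,\dots,c_{p_c}\}$ is a set of distinct nodes and $E_c\in\mathbb{R}^{n\times p_c}$ has $k$-th column the $c_k$-th standard unit vector; $\gamma(a)=(\gamma_1(a_1),\dots,\gamma_l(a_l))^T$, $\eta(b)=(\eta_{c_1}(b_1),\dots,\eta_{c_{p_c}}(b_{p_c}))^T$ with all $\gamma_k,\eta_{c_j}$ continuously differentiable and nondecreasing; $\Psi(x)=-B_c\gamma(B_c^Th(x))-E_c\eta(E_c^Th(x))$. Let $\hat u=Q^{-1}(\hat\kappa-r)$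 with $\hat\kappa=E^T\frac{\mathbb{1}_n\mathbb{1}_n^T}{\mathbb{1}_p^TQ^{-1}\mathbb{1}_p}(\hat d+EQ^{-1}r)$ and $\hat d=d+E_c\eta(E_c^Th(\overline x))$. The maps $f(\mu)=(f_1(\mu_1),\dots,f_m(\mu_m))^T$, $g(\theta)=(g_1(\theta_1),\dots,g_p(\theta_p))^T$ have continuously differentiable strictly increasing components with $\mathcal{R}(f_k)=(\lambda_k^-,\lambda_k^+)$, $\mathcal{R}(g_i)=(u_i^-,u_i^+)$; there exists $\omega\in\mathbb{R}^m$ with $[B^\dagger(\Psi(\overline x)+E\hat u-d)+(I-B^\dagger B)\omega]_k\in\mathcal{R}(f_k)$ for all $k$, and $\hat u_i\in\mathcal{R}(g_i)$ for all $i$. Let $\mathcal{V}_s=\{c_j\in\mathcal{V}_c:\ \eta_{c_j}'(h_{c_j}(\overline x_{c_j}))>0\}$ and suppose $\mathcal{V}_e\cup\mathcal{V}_s$ is a zero forcing set for $\mathcal{G}$. Consider $T_x\dot x=\Psi(x)-B\lambda+Eu-d$, $y=h(x)$, in closed loop with $T_\mu\dot\mu=B^T(h(x)-\overline y)$, $\lambda=f(\mu)$, and $T_\theta\dot\theta=-E^T(h(x)-\overline y)-(g(\theta)-\phi)$, $T_\phi\dot\phi=g(\theta)-\phi-QL^{com}(Q\phi+r)$, $u=g(\theta)$. Let $(\overline x,\overline\mu,\overline\theta,\overline\phi)$ be an equilibrium of this closed-loop system and $$\Upsilon_4=\{(x,\mu,\theta,\phi):\ B(f(\mu)-f(\overline\mu))=\mathbf{0},\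 x=\overline x,\ \theta=\overline\theta,\ \phi=\overline\phi\}.$$ Then, for every initial condition, the solution converges to a point in $\Upsilon_4$, at which $\lambda=f(\mu)$ is constant, $h(x)=\overline y$ and $u=g(\theta)=\hat u$.
   Context: Zero forcing set: color the nodes of a given set $\mathcal{V}_0\subseteq\mathcal{V}$ black and the others white, and repeatedly apply the rule "if a black node has exactly one white neighbor in $\mathcal{G}$, that neighbor becomes black" until no change is possible; $\mathcal{V}_0$ is a zero forcing set if all nodes end up black. $\mathcal{R}(\cdot)$ denotes range; $B^\dagger$ the Moore–Penrose pseudoinverse; $\mathbb{1}_k$ the all-ones vector. Incidence matrices are obtained by arbitrarily orienting edges ($+1$ at the positive end, $-1$ at the negative end, $0$ otherwise). Bounds $\lambda_k^-<\lambda_k^+$, $u_i^-<u_i^+$ are given constants (infinite values allowed). A weighted directed graph is balanced if at every node weighted in-degree equals weighted out-degree; $L^{com}=D-A$ with $A$ the weighted adjacency matrix and $D$ the diagonal out-degree matrix. $\hat u$ is the minimizer of $\frac12u^TQu+r^Tu$ subject to $\mathbf{0}=\Psi(\overline x)-B\lambda+Eu-d$. *)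

theory Defs
  imports "HOL-Analysis.Analysis"
begin

text \<open>Conventions: nodes, edges and all vector/matrix indices are 0-based.
Vectors are functions nat => real (only indices below the stated size matter),
matrices are functions nat => nat => real.\<close>

definition mv :: "(nat \<Rightarrow> nat \<Rightarrow> real) \<Rightarrow> nat \<Rightarrow> (nat \<Rightarrow> real) \<Rightarrow> nat \<Rightarrow> real" where
  "mv A k v = (\<lambda>i. \<Sum>j<k. A i j * v j)"

definition mm :: "(nat \<Rightarrow> nat \<Rightarrow> real) \<Rightarrow> nat \<Rightarrow> (nat \<Rightarrow> nat \<Rightarrow> real) \<Rightarrow> nat \<Rightarrow> nat \<Rightarrow> real" where
  "mm A k C = (\<lambda>i j. \<Sum>l<k. A i l * C l j)"

definition tr :: "(nat \<Rightarrow> nat \<Rightarrow> real) \<Rightarrow> nat \<Rightarrow> nat \<Rightarrow> real" where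
  "tr A = (\<lambda>i j. A j i)"

text \<open>Moore--Penrose pseudoinverse of an n x m matrix B (an m x n matrix),
characterised by the four Penrose conditions (entries outside m x n are 0).\<close>
definition is_pinv :: "nat \<Rightarrow> nat \<Rightarrow> (nat \<Rightarrow> nat \<Rightarrow> real) \<Rightarrow> (nat \<Rightarrow> nat \<Rightarrow> real) \<Rightarrow> bool" where
  "is_pinv n m B X \<longleftrightarrow>
     (\<forall>i j. (m \<le> i \<or> n \<le> j) \<longrightarrow> X i j = 0) \<and>
     (\<forall>i<n. \<forall>j<m. mm (mm B m X) n B i j = B i j) \<and>
     (\<forall>i<m. \<forall>j<n. mm (mm X n B) m X i j = X i j) \<and>
     (\<forall>i<n. \<forall>j<n. mm B m X i j = mm B m X j i) \<and>
     (\<forall>i<m. \<forall>j<m. mm X n B i j = mm X n B j i)"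

definition pinv :: "nat \<Rightarrow> nat \<Rightarrow> (nat \<Rightarrow> nat \<Rightarrow> real) \<Rightarrow> nat \<Rightarrow> nat \<Rightarrow> real" where
  "pinv n m B = (THE X. is_pinv n m B X)"

text \<open>Undirected simple graph on nodes {0..<n} with m edges; edge k has
endpoints fst (e k) (positive end) and snd (e k) (negative end).\<close>
definition simple_graph :: "nat \<Rightarrow> nat \<Rightarrow> (nat \<Rightarrow> nat \<times> nat) \<Rightarrow> bool" where
  "simple_graph n m e \<longleftrightarrow>
     (\<forall>k<m. fst (e k) < n \<and> snd (e k) < n \<and> fst (e k) \<noteq> snd (e k)) \<and>
     (\<forall>k<m. \<forall>k'<m. k \<noteq> k' \<longrightarrow> {fst (e k), snd (e k)} \<noteq> {fst (e k'), snd (e k')})"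

definition incidence :: "nat \<Rightarrow> (nat \<Rightarrow> nat \<times> nat) \<Rightarrow> nat \<Rightarrow> nat \<Rightarrow> real" where
  "incidence m e = (\<lambda>i k. if k < m \<and> i = fst (e k) then 1
                         else if k < m \<and> i = snd (e k) then -1 else 0)"

definition adj :: "nat \<Rightarrow> (nat \<Rightarrow> nat \<times> nat) \<Rightarrow> nat \<Rightarrow> nat \<Rightarrow> bool" where
  "adj m e u v \<longleftrightarrow> (\<exists>k<m. {u, v} = {fst (e k), snd (e k)})"

definition graph_connected :: "nat \<Rightarrow> nat \<Rightarrow> (nat \<Rightarrow> nat \<times> nat) \<Rightarrow> bool" where
  "graph_connected n m e \<longleftrightarrow> (\<forall>u<n. \<forall>v<n. (adj m e)\<^sup>*\<^sup>* u v)"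

inductive zf_black :: "nat \<Rightarrow> nat \<Rightarrow> (nat \<Rightarrow> nat \<times> nat) \<Rightarrow> nat set \<Rightarrow> nat \<Rightarrow> bool"
  for n m e V0 where
  init: "v \<in> V0 \<Longrightarrow> v < n \<Longrightarrow> zf_black n m e V0 v"
| force: "zf_black n m e V0 u \<Longrightarrow> adj m e u v \<Longrightarrow>
          (\<forall>w. adj m e u w \<and> w \<noteq> v \<longrightarrow> zf_black n m e V0 w) \<Longrightarrow> zf_black n m e V0 v"

definition zero_forcing_set :: "nat \<Rightarrow> nat \<Rightarrow> (nat \<Rightarrow> nat \<times> nat) \<Rightarrow> nat set \<Rightarrow> bool" where
  "zero_forcing_set n m e V0 \<longleftrightarrow> V0 \<subseteq> {..<n} \<and> (\<forall>v<n. zf_black n m e V0 v)"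

text \<open>Weighted directed graph on {0..<p}: a i j \<ge> 0 is the weight of edge (i,j).\<close>
definition weighted_digraph :: "nat \<Rightarrow> (nat \<Rightarrow> nat \<Rightarrow> real) \<Rightarrow> bool" where
  "weighted_digraph p a \<longleftrightarrow> (\<forall>i<p. \<forall>j<p. a i j \<ge> 0) \<and> (\<forall>i<p. a i i = 0)"

definition balanced :: "nat \<Rightarrow> (nat \<Rightarrow> nat \<Rightarrow> real) \<Rightarrow> bool" where
  "balanced p a \<longleftrightarrow> (\<forall>i<p. (\<Sum>j<p. a j i) = (\<Sum>j<p. a i j))"

definition strongly_connected :: "nat \<Rightarrow> (nat \<Rightarrow> nat \<Rightarrow> real) \<Rightarrow> bool" where
  "strongly_connected p a \<longleftrightarrow>
     (\<forall>i<p. \<forall>j<p. (\<lambda>u v. u < p \<and> v < p \<and> a u v > 0)\<^sup>*\<^sup>* i j)"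

definition laplacian :: "nat \<Rightarrow> (nat \<Rightarrow> nat \<Rightarrow> real) \<Rightarrow> nat \<Rightarrow> nat \<Rightarrow> real" where
  "laplacian p a = (\<lambda>i j. (if i = j then (\<Sum>k<p. a i k) else 0) - a i j)"

definition C1 :: "(real \<Rightarrow> real) \<Rightarrow> bool" where
  "C1 f \<longleftrightarrow> (\<forall>x. f differentiable (at x)) \<and> continuous_on UNIV (deriv f)"

end

theory Submission
  imports Defs
begin

text \<open>The proof is a Lyapunov argument carried out with Barbalat's lemma. The energy \<open>V\<close>, the
  sum of the primitives \<open>\<integral> (h\<^sub>i - h\<^sub>i xbar\<^sub>i)\<close>, \<open>\<integral> (f\<^sub>k - f\<^sub>k mubar\<^sub>k)\<close>,
  \<open>\<integral> (g\<^sub>i - g\<^sub>i thetabar\<^sub>i)\<close> and \<open>(\<phi>\<^sub>i - phibar\<^sub>i)\<^sup>2 / 2\<close> weighted by the time constants,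
  decreases along solutions at the rate \<open>W1 + W2 + W3 \<ge> 0\<close>, produced by the monotone coupling
  \<open>\<Psi>\<close>, the damping of \<open>\<theta>\<close> towards \<open>\<phi>\<close> and the communication Laplacian. The primitives
  grow at least linearly, so all states are bounded, hence uniformly continuous, and Barbalat's
  lemma gives \<open>W1, W2, W3 \<rightarrow> 0\<close>: \<open>Q \<phi>\<close> reaches consensus and \<open>g \<theta> - \<phi> \<rightarrow> 0\<close>. The \<open>\<theta>\<close>-equations
  then force the outputs of the input nodes to converge, and the \<open>x\<close>-equations propagate this
  along the zero forcing process, since at a forcing node only one incident edge term is still
  unknown. Summing the \<open>x\<close>-equations cancels the incidence terms and yields \<open>\<phi> \<rightarrow> phibar\<close>.
  Finally a limit point \<open>L\<close> of the bounded \<open>\<mu>\<close> is again an equilibrium value, and the energy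
  centred at \<open>L\<close> is nonincreasing and vanishes along a sequence, so \<open>\<mu> \<rightarrow> L\<close>.\<close>

section \<open>Bounded uniformly continuous signals\<close>

definition regular_on :: "real set \<Rightarrow> (real \<Rightarrow> real) \<Rightarrow> bool" where
  "regular_on S u \<longleftrightarrow> bounded (u ` S) \<and> uniformly_continuous_on S u"

lemma bounded_image_mult:
  fixes u v :: "'a \<Rightarrow> real"
  assumes "bounded (u ` S)" "bounded (v ` S)"
  shows "bounded ((\<lambda>t. u t * v t) ` S)"
proof -
  obtain M N where "\<forall>t\<in>S. \<bar>u t\<bar> \<le> M" "\<forall>t\<in>S. \<bar>v t\<bar> \<le> N"
    using assms by (auto simp: bounded_real)
  then have "\<forall>t\<in>S. \<bar>u t * v t\<bar> \<le> M * N"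
    by (simp add: abs_mult mult_mono')
  then show ?thesis by (auto simp: bounded_real)
qed

lemma bounded_image_compose:
  fixes u :: "'a \<Rightarrow> real" and \<phi> :: "real \<Rightarrow> real"
  assumes "continuous_on UNIV \<phi>" "bounded (u ` S)"
  shows "bounded ((\<lambda>t. \<phi> (u t)) ` S)"
proof -
  have "compact (\<phi> ` closure (u ` S))"
    using assms by (intro compact_continuous_image continuous_on_subset[OF assms(1)])
      (auto simp: compact_closure)
  then show ?thesis
    by (rule bounded_subset[OF compact_imp_bounded]) (auto intro: closure_subset[THEN subsetD])
qed

lemma uniformly_continuous_on_compose_bounded:
  fixes u :: "'a::metric_space \<Rightarrow> real" and \<phi> :: "real \<Rightarrow> real"
  assumes "continuous_on UNIV \<phi>" "bounded (u ` S)" "uniformly_continuous_on S u"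
  shows "uniformly_continuous_on S (\<lambda>t. \<phi> (u t))"
proof (rule uniformly_continuous_on_compose[OF assms(3)])
  have "uniformly_continuous_on (closure (u ` S)) \<phi>"
    using assms(2) by (intro compact_uniformly_continuous continuous_on_subset[OF assms(1)])
      (auto simp: compact_closure)
  then show "uniformly_continuous_on (u ` S) \<phi>"
    unfolding uniformly_continuous_on_def by (meson closure_subset subsetD)
qed

lemma uniformly_continuous_on_mult_bounded:
  fixes u v :: "'a::metric_space \<Rightarrow> real"
  assumes u: "bounded (u ` S)" "uniformly_continuous_on S u"
    and v: "bounded (v ` S)" "uniformly_continuous_on S v"
  shows "uniformly_continuous_on S (\<lambda>t. u t * v t)"
  unfolding uniformly_continuous_on_def
proof (intro allI impI)
  fix \<epsilon> :: real assume "\<epsilon> > 0"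
  obtain M N where M: "M > 0" "\<forall>t\<in>S. \<bar>u t\<bar> \<le> M" and N: "N > 0" "\<forall>t\<in>S. \<bar>v t\<bar> \<le> N"
    using u(1) v(1) by (auto simp: bounded_pos)
  have "\<epsilon> / (2 * N) > 0" "\<epsilon> / (2 * M) > 0" using \<open>\<epsilon> > 0\<close> M N by auto
  obtain du where du: "du > 0" "\<forall>t\<in>S. \<forall>s\<in>S. dist s t < du \<longrightarrow> \<bar>u s - u t\<bar> < \<epsilon> / (2 * N)"
    using u(2) \<open>\<epsilon> / (2 * N) > 0\<close> unfolding uniformly_continuous_on_def dist_real_def by blast
  obtain dv where dv: "dv > 0" "\<forall>t\<in>S. \<forall>s\<in>S. dist s t < dv \<longrightarrow> \<bar>v s - v t\<bar> < \<epsilon> / (2 * M)"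
    using v(2) \<open>\<epsilon> / (2 * M) > 0\<close> unfolding uniformly_continuous_on_def dist_real_def by blast
  show "\<exists>\<delta>>0. \<forall>t\<in>S. \<forall>s\<in>S. dist s t < \<delta> \<longrightarrow> dist (u s * v s) (u t * v t) < \<epsilon>"
  proof (intro exI[of _ "min du dv"] conjI ballI impI)
    fix t s assume ts: "t \<in> S" "s \<in> S" "dist s t < min du dv"
    have "\<bar>u s * v s - u t * v t\<bar> = \<bar>u s * (v s - v t) + v t * (u s - u t)\<bar>"
      by (simp add: algebra_simps)
    also have "\<dots> \<le> \<bar>u s\<bar> * \<bar>v s - v t\<bar> + \<bar>v t\<bar> * \<bar>u s - u t\<bar>"
      by (metis abs_mult abs_triangle_ineq)
    also have "\<dots> \<le> M * \<bar>v s - v t\<bar> + N * \<bar>u s - u t\<bar>"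
      using M N ts by (intro add_mono mult_right_mono) auto
    also have "\<dots> < M * (\<epsilon> / (2 * M)) + N * (\<epsilon> / (2 * N))"
      using du dv ts M N by (intro add_strict_mono mult_strict_left_mono) auto
    also have "\<dots> = \<epsilon>" using M N by simp
    finally show "dist (u s * v s) (u t * v t) < \<epsilon>" by (simp add: dist_real_def)
  qed (use du dv in simp)
qed

lemma regular_on_const: "regular_on S (\<lambda>t. c)"
  by (auto simp: regular_on_def bounded_real uniformly_continuous_on_const)

lemma regular_on_add: "regular_on S u \<Longrightarrow> regular_on S v \<Longrightarrow> regular_on S (\<lambda>t. u t + v t)"
  unfolding regular_on_def
  by (auto intro: bounded_plus_comp uniformly_continuous_on_add)

lemma regular_on_mult: "regular_on S u \<Longrightarrow> regular_on S v \<Longrightarrow> regular_on S (\<lambda>t. u t * v t)"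
  unfolding regular_on_def by (simp add: bounded_image_mult uniformly_continuous_on_mult_bounded)

lemma regular_on_compose:
  "continuous_on UNIV \<phi> \<Longrightarrow> regular_on S u \<Longrightarrow> regular_on S (\<lambda>t. \<phi> (u t))"
  unfolding regular_on_def
  by (simp add: bounded_image_compose uniformly_continuous_on_compose_bounded)

lemma regular_on_has_derivative:
  assumes "convex S"
    and der: "\<And>t. t \<in> S \<Longrightarrow> (u has_real_derivative u' t) (at t within S)"
    and "bounded (u ` S)" "bounded (u' ` S)"
  shows "regular_on S u"
proof -
  obtain M where M: "M > 0" "\<forall>t\<in>S. \<bar>u' t\<bar> \<le> M"
    using \<open>bounded (u' ` S)\<close> by (auto simp: bounded_pos)
  have lip: "\<bar>u s - u t\<bar> \<le> M * \<bar>s - t\<bar>" if "s \<in> S" "t \<in> S" for s t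
    using field_differentiable_bound[OF \<open>convex S\<close> der, of M s t] M that by simp
  then have "uniformly_continuous_on S u"
    unfolding uniformly_continuous_on_def dist_real_def
  proof (intro allI impI exI[of _ "\<epsilon> / M" for \<epsilon>] conjI ballI)
    fix \<epsilon> s t :: real assume "\<epsilon> > 0" "s \<in> S" "t \<in> S" "\<bar>s - t\<bar> < \<epsilon> / M"
    then show "\<bar>u s - u t\<bar> < \<epsilon>"
      using lip[of s t] M by (simp add: pos_less_divide_eq mult.commute order_le_less_trans)
  qed (use M in simp)
  with \<open>bounded (u ` S)\<close> show ?thesis by (simp add: regular_on_def)
qed

section \<open>Slowly varying signals and Barbalat's lemma\<close>

text \<open>Slow variation is weaker than convergence, holds for bounded monotone signals, and is
  preserved by the operations used below; it is the hypothesis of Barbalat's lemma.\<close>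
definition slowly_varying :: "(real \<Rightarrow> real) \<Rightarrow> bool" where
  "slowly_varying u \<longleftrightarrow> (\<forall>\<epsilon>>0. \<exists>T. \<forall>t\<ge>T. \<forall>\<tau>\<in>{0..1}. \<bar>u (t + \<tau>) - u t\<bar> < \<epsilon>)"

lemma mvt_nonneg_reals:
  assumes der: "\<And>t. t \<ge> 0 \<Longrightarrow> (u has_real_derivative u' t) (at t within {0..})"
    and "0 \<le> a" "a < b"
  shows "\<exists>\<xi>. a < \<xi> \<and> \<xi> < b \<and> u b - u a = u' \<xi> * (b - a)"
proof -
  have "(u has_derivative (\<lambda>h. u' x * h)) (at x within {a..b})" if "a \<le> x" "x \<le> b" for x
    using DERIV_subset[OF der] that \<open>0 \<le> a\<close> by (auto simp: has_field_derivative_def)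
  from mvt_simple[OF \<open>a < b\<close> this] show ?thesis by auto
qed

lemma nonincreasing_of_deriv_nonpos:
  assumes "\<And>t. t \<ge> 0 \<Longrightarrow> (V has_real_derivative V' t) (at t within {0..})"
    and "\<And>t. t \<ge> 0 \<Longrightarrow> V' t \<le> 0" and "0 \<le> s" "s \<le> t"
  shows "V t \<le> V s"
proof (cases "s = t")
  case False
  then obtain \<xi> where "s < \<xi>" "V t - V s = V' \<xi> * (t - s)"
    using mvt_nonneg_reals[OF assms(1), of s t] assms(3,4) by auto
  moreover have "V' \<xi> * (t - s) \<le> 0"
    using assms(2)[of \<xi>] \<open>s < \<xi>\<close> assms(3,4) by (simp add: mult_nonpos_nonneg)
  ultimately show ?thesis by simp
qed simp

lemma tendsto_imp_slowly_varying:
  assumes "(u \<longlongrightarrow> L) at_top"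
  shows "slowly_varying u"
  unfolding slowly_varying_def
proof (intro allI impI)
  fix \<epsilon> :: real assume "\<epsilon> > 0"
  then have "\<epsilon> / 2 > 0" by simp
  then have "eventually (\<lambda>t. \<bar>u t - L\<bar> < \<epsilon> / 2) at_top"
    using assms unfolding tendsto_iff dist_real_def by blast
  then obtain T where T: "\<forall>t\<ge>T. \<bar>u t - L\<bar> < \<epsilon> / 2"
    by (auto simp: eventually_at_top_linorder)
  have "\<bar>u (t + \<tau>) - u t\<bar> < \<epsilon>" if "t \<ge> T" "\<tau> \<in> {0..1}" for t \<tau>
  proof -
    have "\<bar>u (t + \<tau>) - L\<bar> < \<epsilon> / 2" "\<bar>u t - L\<bar> < \<epsilon> / 2" using T that by auto
    then show ?thesis by linarith
  qed
  then show "\<exists>T. \<forall>t\<ge>T. \<forall>\<tau>\<in>{0..1}. \<bar>u (t + \<tau>) - u t\<bar> < \<epsilon>" by blast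
qed

lemma slowly_varying_const: "slowly_varying (\<lambda>t. c)"
  by (auto simp: slowly_varying_def)

lemma slowly_varying_add:
  assumes "slowly_varying u" "slowly_varying v"
  shows "slowly_varying (\<lambda>t. u t + v t)"
  unfolding slowly_varying_def
proof (intro allI impI)
  fix \<epsilon> :: real assume "\<epsilon> > 0"
  then have "\<epsilon> / 2 > 0" by simp
  then obtain T1 T2 where
    T1: "\<forall>t\<ge>T1. \<forall>\<tau>\<in>{0..1}. \<bar>u (t + \<tau>) - u t\<bar> < \<epsilon> / 2" and
    T2: "\<forall>t\<ge>T2. \<forall>\<tau>\<in>{0..1}. \<bar>v (t + \<tau>) - v t\<bar> < \<epsilon> / 2"
    using assms unfolding slowly_varying_def by blast
  have "\<bar>u (t + \<tau>) + v (t + \<tau>) - (u t + v t)\<bar> < \<epsilon>" if "max T1 T2 \<le> t" "\<tau> \<in> {0..1}" for t \<tau>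
  proof -
    have "\<bar>u (t + \<tau>) - u t\<bar> < \<epsilon> / 2" "\<bar>v (t + \<tau>) - v t\<bar> < \<epsilon> / 2" using T1 T2 that by auto
    then show ?thesis by linarith
  qed
  then show "\<exists>T. \<forall>t\<ge>T. \<forall>\<tau>\<in>{0..1}. \<bar>u (t + \<tau>) + v (t + \<tau>) - (u t + v t)\<bar> < \<epsilon>"
    by blast
qed

lemma slowly_varying_cmult:
  assumes "slowly_varying u"
  shows "slowly_varying (\<lambda>t. c * u t)"
  unfolding slowly_varying_def
proof (intro allI impI)
  fix \<epsilon> :: real assume "\<epsilon> > 0"
  then have "\<epsilon> / (\<bar>c\<bar> + 1) > 0" by simp
  then obtain T where T: "\<forall>t\<ge>T. \<forall>\<tau>\<in>{0..1}. \<bar>u (t + \<tau>) - u t\<bar> < \<epsilon> / (\<bar>c\<bar> + 1)"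
    using assms unfolding slowly_varying_def by blast
  have "\<bar>c * u (t + \<tau>) - c * u t\<bar> < \<epsilon>" if "t \<ge> T" "\<tau> \<in> {0..1}" for t \<tau>
  proof -
    have "\<bar>c * u (t + \<tau>) - c * u t\<bar> \<le> (\<bar>c\<bar> + 1) * \<bar>u (t + \<tau>) - u t\<bar>"
      by (simp add: abs_mult right_diff_distrib[symmetric] mult_right_mono)
    also have "\<dots> < (\<bar>c\<bar> + 1) * (\<epsilon> / (\<bar>c\<bar> + 1))"
      using T that by (intro mult_strict_left_mono) auto
    finally show ?thesis by simp
  qed
  then show "\<exists>T. \<forall>t\<ge>T. \<forall>\<tau>\<in>{0..1}. \<bar>c * u (t + \<tau>) - c * u t\<bar> < \<epsilon>" by blast
qed

lemma slowly_varying_diff: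
  "slowly_varying u \<Longrightarrow> slowly_varying v \<Longrightarrow> slowly_varying (\<lambda>t. u t - v t)"
  using slowly_varying_add[OF _ slowly_varying_cmult[of v "-1"], of u] by simp

lemma slowly_varying_sum:
  "(\<And>i. i \<in> A \<Longrightarrow> slowly_varying (f i)) \<Longrightarrow> slowly_varying (\<lambda>t. \<Sum>i\<in>A. f i t)"
  by (induction A rule: infinite_finite_induct)
    (auto simp: slowly_varying_const intro!: slowly_varying_add)

lemma slowly_varying_compose:
  fixes \<phi> :: "real \<Rightarrow> real"
  assumes "continuous_on UNIV \<phi>" "bounded (u ` {0..})" "slowly_varying u"
  shows "slowly_varying (\<lambda>t. \<phi> (u t))"
  unfolding slowly_varying_def
proof (intro allI impI)
  fix \<epsilon> :: real assume "\<epsilon> > 0"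
  define K where "K = closure (u ` {0..})"
  have "uniformly_continuous_on K \<phi>"
    using assms(2) unfolding K_def
    by (intro compact_uniformly_continuous continuous_on_subset[OF assms(1)])
      (auto simp: compact_closure)
  then obtain d where d: "d > 0" "\<forall>y\<in>K. \<forall>z\<in>K. \<bar>z - y\<bar> < d \<longrightarrow> \<bar>\<phi> z - \<phi> y\<bar> < \<epsilon>"
    using \<open>\<epsilon> > 0\<close> unfolding uniformly_continuous_on_def dist_real_def by blast
  obtain T where T: "\<forall>t\<ge>T. \<forall>\<tau>\<in>{0..1}. \<bar>u (t + \<tau>) - u t\<bar> < d"
    using assms(3) d(1) unfolding slowly_varying_def by blast
  have uK: "u s \<in> K" if "s \<ge> 0" for s
    using that closure_subset unfolding K_def by fastforce
  show "\<exists>T. \<forall>t\<ge>T. \<forall>\<tau>\<in>{0..1}. \<bar>\<phi> (u (t + \<tau>)) - \<phi> (u t)\<bar> < \<epsilon>"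
    using T d(2) uK by (intro exI[of _ "max T 0"]) auto
qed

text \<open>A continuous strictly increasing \<open>\<phi>\<close> is uniformly strictly increasing on compacts, so
  slow variation can be pulled back through \<open>\<phi>\<close>.\<close>
lemma slowly_varying_cancel_strict_mono:
  fixes \<phi> :: "real \<Rightarrow> real"
  assumes sm: "strict_mono \<phi>" and cont: "continuous_on UNIV \<phi>"
    and bu: "bounded (u ` {0..})" and s: "slowly_varying (\<lambda>t. \<phi> (u t))"
  shows "slowly_varying u"
  unfolding slowly_varying_def
proof (intro allI impI)
  fix \<epsilon> :: real assume e: "\<epsilon> > 0"
  obtain M where M: "\<forall>t\<ge>0. \<bar>u t\<bar> \<le> M" using bu by (auto simp: bounded_real)
  have "continuous_on {-M..M} (\<lambda>a. \<phi> (a + \<epsilon>) - \<phi> a)"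
    by (intro continuous_intros continuous_on_compose2[OF cont]) auto
  moreover have "{-M..M} \<noteq> {}" using M by (auto dest: spec[of _ 0])
  ultimately obtain a0 where a0: "\<forall>a\<in>{-M..M}. \<phi> (a0 + \<epsilon>) - \<phi> a0 \<le> \<phi> (a + \<epsilon>) - \<phi> a"
    using continuous_attains_inf[OF compact_Icc] by blast
  define c where "c = \<phi> (a0 + \<epsilon>) - \<phi> a0"
  have "c > 0" using sm e unfolding c_def strict_mono_def by simp
  have gap: "\<bar>a - b\<bar> < \<epsilon>" if "a \<in> {-M..M}" "b \<in> {-M..M}" "\<bar>\<phi> a - \<phi> b\<bar> < c" for a b
  proof (rule ccontr)
    assume "\<not> \<bar>a - b\<bar> < \<epsilon>"
    then have "a + \<epsilon> \<le> b \<or> b + \<epsilon> \<le> a" by auto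
    then show False
    proof
      assume "a + \<epsilon> \<le> b"
      then have "\<phi> (a + \<epsilon>) \<le> \<phi> b" using sm by (simp add: strict_mono_less_eq)
      moreover have "c \<le> \<phi> (a + \<epsilon>) - \<phi> a" using a0 that(1) unfolding c_def by blast
      ultimately show False using that(3) by linarith
    next
      assume "b + \<epsilon> \<le> a"
      then have "\<phi> (b + \<epsilon>) \<le> \<phi> a" using sm by (simp add: strict_mono_less_eq)
      moreover have "c \<le> \<phi> (b + \<epsilon>) - \<phi> b" using a0 that(2) unfolding c_def by blast
      ultimately show False using that(3) by linarith
    qed
  qed
  obtain T where T: "\<forall>t\<ge>T. \<forall>\<tau>\<in>{0..1}. \<bar>\<phi> (u (t + \<tau>)) - \<phi> (u t)\<bar> < c"
    using s \<open>c > 0\<close> unfolding slowly_varying_def by blast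
  have "\<bar>u (t + \<tau>) - u t\<bar> < \<epsilon>" if "max T 0 \<le> t" "\<tau> \<in> {0..1}" for t \<tau>
    using gap T M[rule_format, of t] M[rule_format, of "t + \<tau>"] that by (auto simp: abs_le_iff)
  then show "\<exists>T. \<forall>t\<ge>T. \<forall>\<tau>\<in>{0..1}. \<bar>u (t + \<tau>) - u t\<bar> < \<epsilon>" by blast
qed

lemma slowly_varying_nonincreasing:
  assumes "\<And>s t. 0 \<le> s \<Longrightarrow> s \<le> t \<Longrightarrow> V t \<le> V s" and "\<And>t. t \<ge> 0 \<Longrightarrow> b \<le> V t"
  shows "slowly_varying V"
  unfolding slowly_varying_def
proof (intro allI impI)
  fix \<epsilon> :: real assume "\<epsilon> > 0"
  define I where "I = Inf (V ` {0..})"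
  have bdd: "bdd_below (V ` {0..})" using assms(2) by (auto intro!: bdd_belowI[of _ b])
  obtain T where T: "T \<ge> 0" "V T < I + \<epsilon>"
    using cInf_lessD[of "V ` {0..}" "I + \<epsilon>"] \<open>\<epsilon> > 0\<close> unfolding I_def by auto
  have I: "I \<le> V t" if "t \<ge> 0" for t unfolding I_def using bdd that by (auto intro: cInf_lower)
  have "\<bar>V (t + \<tau>) - V t\<bar> < \<epsilon>" if "T \<le> t" "\<tau> \<in> {0..1}" for t \<tau>
  proof -
    have "I \<le> V (t + \<tau>)" "V (t + \<tau>) \<le> V t" "V t \<le> V T"
      using I assms(1) T that by auto
    then show ?thesis using T by linarith
  qed
  then show "\<exists>T. \<forall>t\<ge>T. \<forall>\<tau>\<in>{0..1}. \<bar>V (t + \<tau>) - V t\<bar> < \<epsilon>" by blast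
qed

lemma slowly_varying_of_deriv_tendsto_zero:
  assumes der: "\<And>t. t \<ge> 0 \<Longrightarrow> (u has_real_derivative u' t) (at t within {0..})"
    and lim: "(u' \<longlongrightarrow> 0) at_top"
  shows "slowly_varying u"
  unfolding slowly_varying_def
proof (intro allI impI)
  fix \<epsilon> :: real assume "\<epsilon> > 0"
  then obtain T where T: "\<forall>t\<ge>T. \<bar>u' t\<bar> < \<epsilon>"
    using lim unfolding tendsto_iff eventually_at_top_linorder dist_real_def by force
  have "\<bar>u (t + \<tau>) - u t\<bar> < \<epsilon>" if "max T 0 \<le> t" "\<tau> \<in> {0..1}" for t \<tau>
  proof (cases "\<tau> = 0")
    case False
    have "0 \<le> t" "0 < \<tau>" using that False by auto
    then obtain \<xi> where "t < \<xi>" "u (t + \<tau>) - u t = u' \<xi> * \<tau>"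
      using mvt_nonneg_reals[OF der, of t "t + \<tau>"] by auto
    moreover have "\<bar>u' \<xi>\<bar> * \<tau> \<le> \<bar>u' \<xi>\<bar>" using that by (simp add: mult_left_le)
    moreover have "\<bar>u' \<xi>\<bar> < \<epsilon>" using T \<open>t < \<xi>\<close> that by auto
    ultimately show ?thesis using \<open>0 < \<tau>\<close> by (simp add: abs_mult)
  qed (use \<open>\<epsilon> > 0\<close> in simp)
  then show "\<exists>T. \<forall>t\<ge>T. \<forall>\<tau>\<in>{0..1}. \<bar>u (t + \<tau>) - u t\<bar> < \<epsilon>" by blast
qed

text \<open>Barbalat's lemma. On a window of length \<open>\<tau>\<close> the mean value theorem yields a point where
  \<open>u'\<close> is small, and uniform continuity spreads this to the whole window.\<close>
lemma deriv_tendsto_zero_of_slowly_varying: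
  assumes der: "\<And>t. t \<ge> 0 \<Longrightarrow> (u has_real_derivative u' t) (at t within {0..})"
    and uc: "uniformly_continuous_on {0..} u'" and s: "slowly_varying u"
  shows "(u' \<longlongrightarrow> 0) at_top"
  unfolding tendsto_iff eventually_at_top_linorder dist_real_def
proof (intro allI impI)
  fix \<epsilon> :: real assume "\<epsilon> > 0"
  then have "\<epsilon> / 2 > 0" by simp
  then obtain \<delta> where \<delta>: "\<delta> > 0" "\<forall>t\<in>{0..}. \<forall>s\<in>{0..}. dist s t < \<delta> \<longrightarrow> dist (u' s) (u' t) < \<epsilon> / 2"
    using uc unfolding uniformly_continuous_on_def by blast
  define \<tau> where "\<tau> = min (\<delta> / 2) 1"
  have \<tau>: "0 < \<tau>" "\<tau> \<le> 1" "\<tau> < \<delta>" using \<delta> by (auto simp: \<tau>_def)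
  then have "\<epsilon> / 2 * \<tau> > 0" using \<open>\<epsilon> > 0\<close> by simp
  then obtain T where "\<forall>t\<ge>T. \<forall>\<sigma>\<in>{0..1}. \<bar>u (t + \<sigma>) - u t\<bar> < \<epsilon> / 2 * \<tau>"
    using s unfolding slowly_varying_def by blast
  then have T: "\<forall>t\<ge>T. \<bar>u (t + \<tau>) - u t\<bar> < \<epsilon> / 2 * \<tau>" using \<tau> by auto
  have "\<bar>u' t - 0\<bar> < \<epsilon>" if "max T 0 \<le> t" for t
  proof -
    have "0 \<le> t" using that by simp
    then obtain \<xi> where \<xi>: "t < \<xi>" "\<xi> < t + \<tau>" "u (t + \<tau>) - u t = u' \<xi> * \<tau>"
      using mvt_nonneg_reals[OF der, of t "t + \<tau>"] \<tau> by auto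
    have "\<bar>u' \<xi>\<bar> * \<tau> < \<epsilon> / 2 * \<tau>"
      using T[rule_format, of t] that \<xi>(3) \<tau>(1) by (simp add: abs_mult)
    then have "\<bar>u' \<xi>\<bar> < \<epsilon> / 2" using \<tau>(1) mult_less_cancel_right_pos by blast
    moreover have "\<bar>u' \<xi> - u' t\<bar> < \<epsilon> / 2"
      using \<delta>(2) \<xi> \<tau> \<open>0 \<le> t\<close> by (auto simp: dist_real_def)
    ultimately show ?thesis by linarith
  qed
  then show "\<exists>T. \<forall>t\<ge>T. \<bar>u' t - 0\<bar> < \<epsilon>" by blast
qed

section \<open>Primitives of monotone functions\<close>

text \<open>\<open>prim \<phi> a s\<close> is the paper's \<open>\<integral>\<^sub>a\<^sup>s (\<phi> \<sigma> - \<phi> a) d\<sigma>\<close>, introduced through an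
  antiderivative; it is only meaningful for continuous \<open>\<phi>\<close>.\<close>
definition prim :: "(real \<Rightarrow> real) \<Rightarrow> real \<Rightarrow> real \<Rightarrow> real" where
  "prim \<phi> a = (SOME P. P a = 0 \<and> (\<forall>s. (P has_real_derivative (\<phi> s - \<phi> a)) (at s)))"

lemma prim_exists:
  assumes "continuous_on UNIV \<phi>"
  shows "\<exists>P. P a = 0 \<and> (\<forall>s. (P has_real_derivative (\<phi> s - \<phi> a)) (at s))"
proof -
  have "isCont (\<lambda>s. \<phi> s - \<phi> a) s" for s
    using assms by (intro continuous_intros) (simp add: continuous_on_eq_continuous_at)
  then obtain F where "\<And>s. (F has_vector_derivative (\<phi> s - \<phi> a)) (at s)"
    using einterval_antiderivative[of "-\<infinity>" "\<infinity>" "\<lambda>s. \<phi> s - \<phi> a"] by auto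
  then have F: "\<And>s. (F has_real_derivative (\<phi> s - \<phi> a)) (at s)"
    by (simp add: has_real_derivative_iff_has_vector_derivative)
  have "((\<lambda>s. F s - F a) has_real_derivative (\<phi> s - \<phi> a)) (at s)" for s
    using F[of s] by (auto intro!: derivative_eq_intros)
  then show ?thesis by (intro exI[of _ "\<lambda>s. F s - F a"]) simp
qed

lemma prim_self: "continuous_on UNIV \<phi> \<Longrightarrow> prim \<phi> a a = 0"
  unfolding prim_def using someI_ex[OF prim_exists] by blast

lemma has_real_derivative_prim:
  "continuous_on UNIV \<phi> \<Longrightarrow> (prim \<phi> a has_real_derivative (\<phi> s - \<phi> a)) (at s)"
  unfolding prim_def using someI_ex[OF prim_exists] by blast

lemma continuous_on_prim: "continuous_on UNIV \<phi> \<Longrightarrow> continuous_on UNIV (prim \<phi> a)"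
  using has_real_derivative_prim
  by (intro continuous_at_imp_continuous_on ballI DERIV_isCont) blast

lemma mvt_real_derivative:
  assumes "\<And>x. (P has_real_derivative P' x) (at x)" "a \<le> b"
  shows "\<exists>\<xi>. a \<le> \<xi> \<and> \<xi> \<le> b \<and> P b - P a = P' \<xi> * (b - a)"
proof -
  have "(P has_derivative (\<lambda>h. P' x * h)) (at x within {a..b})" for x
    using assms(1) by (simp add: has_field_derivative_def has_derivative_at_withinI)
  from mvt_very_simple[OF \<open>a \<le> b\<close> this] show ?thesis by auto
qed

lemma prim_ge_right:
  assumes cont: "continuous_on UNIV \<phi>" and "mono \<phi>" and "a \<le> b" "b \<le> s"
  shows "(s - b) * (\<phi> b - \<phi> a) \<le> prim \<phi> a s"
proof -
  note der = has_real_derivative_prim[OF cont, of a]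
  obtain \<xi> where "a \<le> \<xi>" "prim \<phi> a b - prim \<phi> a a = (\<phi> \<xi> - \<phi> a) * (b - a)"
    using mvt_real_derivative[OF der \<open>a \<le> b\<close>] by blast
  moreover have "0 \<le> (\<phi> \<xi> - \<phi> a) * (b - a)"
    using monoD[OF \<open>mono \<phi>\<close> \<open>a \<le> \<xi>\<close>] \<open>a \<le> b\<close> by simp
  ultimately have "0 \<le> prim \<phi> a b" using prim_self[OF cont] by simp
  obtain \<zeta> where "b \<le> \<zeta>" "prim \<phi> a s - prim \<phi> a b = (\<phi> \<zeta> - \<phi> a) * (s - b)"
    using mvt_real_derivative[OF der \<open>b \<le> s\<close>] by blast
  moreover have "(\<phi> b - \<phi> a) * (s - b) \<le> (\<phi> \<zeta> - \<phi> a) * (s - b)"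
    using monoD[OF \<open>mono \<phi>\<close> \<open>b \<le> \<zeta>\<close>] \<open>b \<le> s\<close> by (intro mult_right_mono) auto
  ultimately show ?thesis using \<open>0 \<le> prim \<phi> a b\<close> by (simp add: mult.commute)
qed

lemma prim_ge_left:
  assumes cont: "continuous_on UNIV \<phi>" and "mono \<phi>" and "b \<le> a" "s \<le> b"
  shows "(b - s) * (\<phi> a - \<phi> b) \<le> prim \<phi> a s"
proof -
  note der = has_real_derivative_prim[OF cont, of a]
  obtain \<xi> where "\<xi> \<le> a" "prim \<phi> a a - prim \<phi> a b = (\<phi> \<xi> - \<phi> a) * (a - b)"
    using mvt_real_derivative[OF der \<open>b \<le> a\<close>] by blast
  moreover have "(\<phi> \<xi> - \<phi> a) * (a - b) \<le> 0"
    using monoD[OF \<open>mono \<phi>\<close> \<open>\<xi> \<le> a\<close>] \<open>b \<le> a\<close> by (simp add: mult_nonpos_nonneg)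
  ultimately have "0 \<le> prim \<phi> a b" using prim_self[OF cont] by simp
  obtain \<zeta> where "\<zeta> \<le> b" "prim \<phi> a b - prim \<phi> a s = (\<phi> \<zeta> - \<phi> a) * (b - s)"
    using mvt_real_derivative[OF der \<open>s \<le> b\<close>] by blast
  moreover have "(\<phi> \<zeta> - \<phi> a) * (b - s) \<le> (\<phi> b - \<phi> a) * (b - s)"
    using monoD[OF \<open>mono \<phi>\<close> \<open>\<zeta> \<le> b\<close>] \<open>s \<le> b\<close> by (intro mult_right_mono) auto
  ultimately show ?thesis using \<open>0 \<le> prim \<phi> a b\<close> by (simp add: algebra_simps)
qed

lemma prim_nonneg:
  assumes "continuous_on UNIV \<phi>" "mono \<phi>"
  shows "0 \<le> prim \<phi> a s"
proof (cases "a \<le> s")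
  case True
  then show ?thesis using prim_ge_right[OF assms order_refl True] by simp
next
  case False
  then show ?thesis using prim_ge_left[OF assms order_refl, of s] by simp
qed

lemma prim_ge_dist:
  assumes cont: "continuous_on UNIV \<phi>" and sm: "strict_mono \<phi>" and "\<delta> > 0"
  shows "(\<bar>s - a\<bar> - \<delta>) * min (\<phi> (a + \<delta>) - \<phi> a) (\<phi> a - \<phi> (a - \<delta>)) \<le> prim \<phi> a s"
    (is "_ * ?c \<le> _")
proof -
  have mono: "mono \<phi>" using sm by (rule strict_mono_mono)
  have "?c > 0" using sm \<open>\<delta> > 0\<close> by (simp add: strict_mono_less)
  consider "a + \<delta> \<le> s" | "s \<le> a - \<delta>" | "\<bar>s - a\<bar> < \<delta>" by linarith
  then show ?thesis
  proof cases
    case 1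
    then have "(\<bar>s - a\<bar> - \<delta>) * ?c \<le> (s - (a + \<delta>)) * (\<phi> (a + \<delta>) - \<phi> a)"
      using \<open>?c > 0\<close> \<open>\<delta> > 0\<close> by (intro mult_mono) auto
    moreover have "a \<le> a + \<delta>" using \<open>\<delta> > 0\<close> by simp
    note prim_ge_right[OF cont mono this 1]
    ultimately show ?thesis by linarith
  next
    case 2
    then have "(\<bar>s - a\<bar> - \<delta>) * ?c \<le> ((a - \<delta>) - s) * (\<phi> a - \<phi> (a - \<delta>))"
      using \<open>?c > 0\<close> \<open>\<delta> > 0\<close> by (intro mult_mono) auto
    moreover have "a - \<delta> \<le> a" using \<open>\<delta> > 0\<close> by simp
    note prim_ge_left[OF cont mono this 2]
    ultimately show ?thesis by linarith
  next
    case 3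
    then have "(\<bar>s - a\<bar> - \<delta>) * ?c \<le> 0" using \<open>?c > 0\<close> by (simp add: mult_nonpos_nonneg)
    then show ?thesis using prim_nonneg[OF cont mono, of a s] by linarith
  qed
qed

lemma prim_sublevel_bounded:
  assumes "continuous_on UNIV \<phi>" "strict_mono \<phi>"
  shows "\<exists>M. \<forall>s. prim \<phi> a s \<le> C \<longrightarrow> \<bar>s\<bar> \<le> M"
proof -
  define c where "c = min (\<phi> (a + 1) - \<phi> a) (\<phi> a - \<phi> (a - 1))"
  have "c > 0" using assms(2) by (simp add: c_def strict_mono_less)
  have "\<bar>s\<bar> \<le> \<bar>a\<bar> + 1 + \<bar>C\<bar> / c" if "prim \<phi> a s \<le> C" for s
  proof -
    have "(\<bar>s - a\<bar> - 1) * c \<le> \<bar>C\<bar>"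
      using prim_ge_dist[OF assms, of 1 s a] that by (simp add: c_def)
    then have "\<bar>s - a\<bar> - 1 \<le> \<bar>C\<bar> / c" using \<open>c > 0\<close> by (simp add: pos_le_divide_eq)
    then show ?thesis by linarith
  qed
  then show ?thesis by blast
qed

lemma tendsto_of_prim_tendsto_zero:
  assumes "continuous_on UNIV \<phi>" "strict_mono \<phi>"
    and lim: "((\<lambda>t. prim \<phi> a (u t)) \<longlongrightarrow> 0) F"
  shows "(u \<longlongrightarrow> a) F"
  unfolding tendsto_iff dist_real_def
proof (intro allI impI)
  fix \<epsilon> :: real assume "\<epsilon> > 0"
  define c where "c = min (\<phi> (a + \<epsilon> / 2) - \<phi> a) (\<phi> a - \<phi> (a - \<epsilon> / 2))"
  have "c > 0" using assms(2) \<open>\<epsilon> > 0\<close> by (simp add: c_def strict_mono_less)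
  then have "\<epsilon> / 2 * c > 0" using \<open>\<epsilon> > 0\<close> by simp
  then have "eventually (\<lambda>t. dist (prim \<phi> a (u t)) 0 < \<epsilon> / 2 * c) F"
    by (rule tendstoD[OF lim])
  then show "eventually (\<lambda>t. \<bar>u t - a\<bar> < \<epsilon>) F"
  proof eventually_elim
    case (elim t)
    have "\<epsilon> / 2 > 0" using \<open>\<epsilon> > 0\<close> by simp
    from prim_ge_dist[OF assms(1,2) this, of "u t" a]
    have "(\<bar>u t - a\<bar> - \<epsilon> / 2) * c \<le> prim \<phi> a (u t)" unfolding c_def .
    with elim have "(\<bar>u t - a\<bar> - \<epsilon> / 2) * c < \<epsilon> / 2 * c" by (simp add: dist_real_def)
    then have "\<bar>u t - a\<bar> - \<epsilon> / 2 < \<epsilon> / 2"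
      using \<open>c > 0\<close> mult_less_cancel_right_pos by blast
    then show ?case by linarith
  qed
qed

lemma has_real_derivative_scaled_prim:
  assumes "(u has_real_derivative F / T) (at t within S)" "T \<noteq> 0" "continuous_on UNIV \<phi>"
  shows "((\<lambda>s. T * prim \<phi> a (u s)) has_real_derivative (\<phi> (u t) - \<phi> a) * F) (at t within S)"
  using DERIV_cmult[OF DERIV_chain'[OF assms(1) has_real_derivative_prim[OF assms(3)]], of T] assms(2)
  by simp

lemma bounded_of_prim_le:
  assumes "continuous_on UNIV \<phi>" "strict_mono \<phi>" "T > 0"
    and "\<And>t. t \<ge> 0 \<Longrightarrow> T * prim \<phi> a (u t) \<le> C"
  shows "bounded (u ` {0..})"
proof -
  obtain M where M: "\<forall>s. prim \<phi> a s \<le> C / T \<longrightarrow> \<bar>s\<bar> \<le> M"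
    using prim_sublevel_bounded[OF assms(1,2)] by blast
  have "\<bar>u t\<bar> \<le> M" if "t \<ge> 0" for t
    using M assms(3) assms(4)[OF that] by (simp add: pos_le_divide_eq mult.commute)
  then show ?thesis by (auto simp: bounded_real)
qed

lemma bounded_seqs_convergent_subseq:
  fixes X :: "nat \<Rightarrow> nat \<Rightarrow> real"
  assumes "\<And>k. k < m \<Longrightarrow> Bseq (\<lambda>j. X j k)"
  shows "\<exists>r L. strict_mono r \<and> (\<forall>k<m. (\<lambda>j. X (r j) k) \<longlonglongrightarrow> L k)"
  using assms
proof (induction m)
  case 0
  show ?case by (intro exI[of _ id]) (auto simp: strict_mono_def)
next
  case (Suc m)
  then obtain r L where r: "strict_mono r" "\<forall>k<m. (\<lambda>j. X (r j) k) \<longlonglongrightarrow> L k" by auto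
  obtain s where s: "strict_mono s" "monoseq (\<lambda>j. X (r (s j)) m)"
    using seq_monosub[of "\<lambda>j. X (r j) m"] by blast
  have "Bseq (\<lambda>j. X (r (s j)) m)"
    using Bseq_subseq[of "\<lambda>j. X j m" "r \<circ> s"] Suc.prems by simp
  then obtain l where l: "(\<lambda>j. X (r (s j)) m) \<longlonglongrightarrow> l"
    using Bseq_monoseq_convergent s(2) by (auto simp: convergent_def)
  have "(\<lambda>j. X ((r \<circ> s) j) k) \<longlonglongrightarrow> (L(m := l)) k" if "k < Suc m" for k
  proof (cases "k = m")
    case False
    then have "(\<lambda>j. X (r j) k) \<longlonglongrightarrow> L k" using r that by simp
    from LIMSEQ_subseq_LIMSEQ[OF this s(1)] False show ?thesis by (simp add: o_def)
  qed (use l in simp)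
  then show ?case using strict_mono_o[OF r(1) s(1)] by blast
qed

lemma nonincreasing_tendsto_of_seq:
  fixes V :: "real \<Rightarrow> real"
  assumes mono: "\<And>s t. 0 \<le> s \<Longrightarrow> s \<le> t \<Longrightarrow> V t \<le> V s"
    and ts: "filterlim ts at_top sequentially" "\<And>j. ts j \<ge> 0"
    and lim: "(\<lambda>j. V (ts j)) \<longlonglongrightarrow> c"
  shows "(V \<longlongrightarrow> c) at_top"
  unfolding tendsto_iff dist_real_def eventually_at_top_linorder
proof (intro allI impI)
  fix \<epsilon> :: real assume "\<epsilon> > 0"
  then have "eventually (\<lambda>j. V (ts j) < c + \<epsilon>) sequentially"
    using order_tendstoD(2)[OF lim, of "c + \<epsilon>"] by simp
  then obtain N where N: "V (ts N) < c + \<epsilon>" by (auto simp: eventually_sequentially)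
  have "\<bar>V t - c\<bar> < \<epsilon>" if "ts N \<le> t" for t
  proof -
    have "eventually (\<lambda>j. t \<le> ts j) sequentially"
      using ts(1) by (simp add: filterlim_at_top)
    then have "eventually (\<lambda>j. V (ts j) \<le> V t) sequentially"
    proof eventually_elim
      case (elim j)
      then show ?case using mono[of t "ts j"] ts(2)[of N] that by linarith
    qed
    then have "c \<le> V t" using tendsto_upperbound[OF lim] by simp
    moreover have "V t \<le> V (ts N)" using mono ts(2) that by blast
    ultimately show ?thesis using N by linarith
  qed
  then show "\<exists>T. \<forall>t\<ge>T. \<bar>V t - c\<bar> < \<epsilon>" by blast
qed

lemma tendsto_zero_sandwich:
  fixes u v :: "'a \<Rightarrow> real"
  assumes "\<And>t. 0 \<le> u t" "\<And>t. u t \<le> v t" "(v \<longlongrightarrow> 0) F"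
  shows "(u \<longlongrightarrow> 0) F"
  by (rule tendsto_sandwich[OF _ _ tendsto_const assms(3)]) (auto intro: always_eventually assms(1,2))

lemma tendsto_zero_of_square:
  fixes u :: "'a \<Rightarrow> real"
  assumes "((\<lambda>t. (u t)\<^sup>2) \<longlongrightarrow> 0) F"
  shows "(u \<longlongrightarrow> 0) F"
proof -
  have "((\<lambda>t. sqrt ((u t)\<^sup>2)) \<longlongrightarrow> sqrt 0) F" using assms by (rule tendsto_real_sqrt)
  then show ?thesis by (simp add: tendsto_rabs_zero_iff)
qed

lemma tendsto_divide_zero_iff:
  fixes u :: "'a \<Rightarrow> real"
  assumes "c \<noteq> 0"
  shows "((\<lambda>t. u t / c) \<longlongrightarrow> 0) F \<longleftrightarrow> (u \<longlongrightarrow> 0) F"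
proof
  assume "((\<lambda>t. u t / c) \<longlongrightarrow> 0) F"
  from tendsto_mult_left_zero[OF this, of c] show "(u \<longlongrightarrow> 0) F" using assms by simp
qed (rule tendsto_divide_zero)

lemma tendsto_cancel_strict_mono:
  fixes \<phi> :: "real \<Rightarrow> real" and u :: "'a \<Rightarrow> real"
  assumes "strict_mono \<phi>" and lim: "((\<lambda>t. \<phi> (u t)) \<longlongrightarrow> \<phi> a) F"
  shows "(u \<longlongrightarrow> a) F"
  unfolding tendsto_iff dist_real_def
proof (intro allI impI)
  fix \<epsilon> :: real assume "\<epsilon> > 0"
  then have "\<phi> (a - \<epsilon>) < \<phi> a" "\<phi> a < \<phi> (a + \<epsilon>)" using assms(1) by (auto simp: strict_mono_less)
  with order_tendstoD[OF lim]
  have "eventually (\<lambda>t. \<phi> (a - \<epsilon>) < \<phi> (u t) \<and> \<phi> (u t) < \<phi> (a + \<epsilon>)) F"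
    by (auto intro: eventually_conj)
  then show "eventually (\<lambda>t. \<bar>u t - a\<bar> < \<epsilon>) F"
    by eventually_elim (use assms(1) in \<open>auto simp: strict_mono_less abs_less_iff\<close>)
qed

section \<open>Incidence matrices and Laplacians\<close>

lemma sum_mult_mv: "(\<Sum>i<n. v i * mv A k w i) = (\<Sum>j<k. w j * mv (tr A) n v j)"
  unfolding mv_def tr_def
  by (simp add: sum_distrib_left sum.swap[of _ "{..<n}"] mult.commute mult.left_commute)

lemma mv_diff: "mv A k u i - mv A k v i = mv A k (\<lambda>j. u j - v j) i"
  unfolding mv_def by (simp add: sum_subtractf right_diff_distrib)

lemma mv_cong: "(\<And>j. j < k \<Longrightarrow> u j = v j) \<Longrightarrow> mv A k u i = mv A k v i"
  unfolding mv_def by simp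

lemma tendsto_mv:
  fixes v :: "'b \<Rightarrow> nat \<Rightarrow> real"
  assumes "\<And>j. j < k \<Longrightarrow> ((\<lambda>t. v t j) \<longlongrightarrow> w j) F"
  shows "((\<lambda>t. mv A k (v t) i) \<longlongrightarrow> mv A k w i) F"
  unfolding mv_def by (intro tendsto_sum tendsto_mult tendsto_const assms) simp

lemma tr_incidence_mv:
  assumes "simple_graph n m e" "k < m"
  shows "mv (tr (incidence m e)) n H k = H (fst (e k)) - H (snd (e k))"
proof -
  have e: "fst (e k) < n" "snd (e k) < n" "fst (e k) \<noteq> snd (e k)"
    using assms by (auto simp: simple_graph_def)
  have "mv (tr (incidence m e)) n H k
      = (\<Sum>i<n. (if i = fst (e k) then H i else 0) - (if i = snd (e k) then H i else 0))"
    unfolding mv_def tr_def using e assms(2) by (intro sum.cong) (auto simp: incidence_def)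
  also have "\<dots> = H (fst (e k)) - H (snd (e k))" using e by (simp add: sum_subtractf)
  finally show ?thesis .
qed

lemma sum_incidence_mv:
  assumes "simple_graph n m e"
  shows "(\<Sum>i<n. mv (incidence m e) m F i) = 0"
proof -
  have "(\<Sum>i<n. mv (incidence m e) m F i) = (\<Sum>k<m. F k * mv (tr (incidence m e)) n (\<lambda>_. 1) k)"
    using sum_mult_mv[where v = "\<lambda>_. 1"] by simp
  also have "\<dots> = 0" by (simp add: tr_incidence_mv[OF assms])
  finally show ?thesis .
qed

lemma laplacian_mv:
  assumes "i < p"
  shows "mv (laplacian p a) p z i = (\<Sum>j<p. a i j * (z i - z j))"
proof -
  have "mv (laplacian p a) p z i = (\<Sum>j<p. (if i = j then (\<Sum>k<p. a i k) * z j else 0) - a i j * z j)"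
    unfolding mv_def laplacian_def by (intro sum.cong refl) (auto simp: algebra_simps)
  also have "\<dots> = (\<Sum>k<p. a i k) * z i - (\<Sum>j<p. a i j * z j)"
    using assms by (simp add: sum_subtractf)
  also have "\<dots> = (\<Sum>j<p. a i j * (z i - z j))"
    by (simp add: sum_distrib_right right_diff_distrib sum_subtractf)
  finally show ?thesis .
qed

text \<open>Balance is what makes the quadratic form of the Laplacian a weighted sum of squared
  disagreements.\<close>
lemma laplacian_quadratic_form:
  assumes "balanced p a"
  shows "(\<Sum>i<p. z i * mv (laplacian p a) p z i) = (\<Sum>i<p. \<Sum>j<p. a i j * (z i - z j)\<^sup>2) / 2"
proof -
  have out_in: "(\<Sum>i<p. \<Sum>j<p. a i j * (z j * z j)) = (\<Sum>i<p. \<Sum>j<p. a i j * (z i * z i))"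
  proof -
    have "(\<Sum>i<p. \<Sum>j<p. a i j * (z j * z j)) = (\<Sum>j<p. (\<Sum>i<p. a i j) * (z j * z j))"
      by (subst sum.swap) (simp add: sum_distrib_right)
    also have "\<dots> = (\<Sum>j<p. (\<Sum>i<p. a j i) * (z j * z j))"
      using assms by (intro sum.cong refl) (simp add: balanced_def)
    finally show ?thesis by (simp add: sum_distrib_right)
  qed
  have "(\<Sum>i<p. z i * mv (laplacian p a) p z i)
      = (\<Sum>i<p. \<Sum>j<p. a i j * (z i * z i)) - (\<Sum>i<p. \<Sum>j<p. a i j * (z i * z j))"
    by (simp add: laplacian_mv sum_distrib_left algebra_simps sum_subtractf)
  moreover have "(\<Sum>i<p. \<Sum>j<p. a i j * (z i - z j)\<^sup>2)
      = (\<Sum>i<p. \<Sum>j<p. a i j * (z i * z i)) + (\<Sum>i<p. \<Sum>j<p. a i j * (z j * z j))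
        - 2 * (\<Sum>i<p. \<Sum>j<p. a i j * (z i * z j))"
    by (simp add: power2_eq_square algebra_simps sum.distrib sum_subtractf sum_distrib_left)
  ultimately show ?thesis using out_in by simp
qed

lemma tendsto_consensus_of_laplacian_energy:
  fixes z :: "'b \<Rightarrow> nat \<Rightarrow> real"
  assumes wd: "weighted_digraph p a" and sc: "strongly_connected p a"
    and lim: "((\<lambda>t. \<Sum>i<p. \<Sum>j<p. a i j * (z t i - z t j)\<^sup>2) \<longlongrightarrow> 0) F"
    and "i < p" "j < p"
  shows "((\<lambda>t. z t i - z t j) \<longlongrightarrow> 0) F"
proof -
  have edge: "((\<lambda>t. z t u - z t v) \<longlongrightarrow> 0) F" if "u < p" "v < p" "a u v > 0" for u v
  proof -
    have le: "a u v * (z t u - z t v)\<^sup>2 \<le> (\<Sum>i<p. \<Sum>j<p. a i j * (z t i - z t j)\<^sup>2)" for t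
    proof -
      have "a u v * (z t u - z t v)\<^sup>2 \<le> (\<Sum>j<p. a u j * (z t u - z t j)\<^sup>2)"
        using wd that by (intro member_le_sum) (auto simp: weighted_digraph_def)
      also have "\<dots> \<le> (\<Sum>i<p. \<Sum>j<p. a i j * (z t i - z t j)\<^sup>2)"
        using wd that by (intro member_le_sum[where f = "\<lambda>i. \<Sum>j<p. a i j * (z t i - z t j)\<^sup>2"] sum_nonneg)
          (auto simp: weighted_digraph_def)
      finally show ?thesis .
    qed
    have "((\<lambda>t. a u v * (z t u - z t v)\<^sup>2) \<longlongrightarrow> 0) F"
      by (rule tendsto_sandwich[OF _ _ tendsto_const lim]) (use le that in auto)
    then have "((\<lambda>t. (a u v * (z t u - z t v)\<^sup>2) / a u v) \<longlongrightarrow> 0 / a u v) F"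
      using that by (intro tendsto_divide tendsto_const) auto
    then have "((\<lambda>t. (z t u - z t v)\<^sup>2) \<longlongrightarrow> 0) F" using that by simp
    then show ?thesis by (rule tendsto_zero_of_square)
  qed
  have "(\<lambda>u v. u < p \<and> v < p \<and> a u v > 0)\<^sup>*\<^sup>* i j"
    using sc \<open>i < p\<close> \<open>j < p\<close> by (simp add: strongly_connected_def)
  then show ?thesis
  proof (induction rule: rtranclp_induct)
    case (step v w)
    with edge have "((\<lambda>t. (z t i - z t v) + (z t v - z t w)) \<longlongrightarrow> 0 + 0) F"
      by (intro tendsto_add) auto
    then show ?case by simp
  qed simp
qed

lemma laplacian_kernel_consensus:
  assumes "weighted_digraph p a" "balanced p a" "strongly_connected p a"
    and kernel: "\<And>j. j < p \<Longrightarrow> mv (laplacian p a) p z j = 0" and "i < p" "j < p"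
  shows "z i = z j"
proof -
  have "(\<Sum>i<p. \<Sum>j<p. a i j * (z i - z j)\<^sup>2) = 0"
    using laplacian_quadratic_form[OF assms(2), of z] kernel by simp
  then have "((\<lambda>_::nat. z i - z j) \<longlongrightarrow> 0) sequentially"
    using tendsto_consensus_of_laplacian_energy[OF assms(1,3), of "\<lambda>_. z"] assms(5,6) by simp
  then show ?thesis by (simp add: LIMSEQ_const_iff)
qed

lemma mono_diff_mult_nonneg:
  fixes \<phi> :: "real \<Rightarrow> real"
  assumes "mono \<phi>"
  shows "0 \<le> (u - v) * (\<phi> u - \<phi> v)"
proof (cases "u \<le> v")
  case True
  then show ?thesis using monoD[OF assms True] by (simp add: mult_nonpos_nonpos)
next
  case False
  then show ?thesis using monoD[OF assms, of v u] by simp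
qed

text \<open>If the "power" \<open>(z - z\<^sub>0)(\<gamma> z - \<gamma> z\<^sub>0)\<close> of a bounded signal vanishes, so does
  \<open>\<gamma> z - \<gamma> z\<^sub>0\<close>: small values of \<open>\<gamma>\<close>-differences come with small values of \<open>z\<close>-differences
  by uniform continuity, and otherwise the product is bounded away from zero.\<close>
lemma tendsto_mono_diff_of_product:
  fixes \<gamma> z :: "real \<Rightarrow> real"
  assumes "mono \<gamma>" "continuous_on UNIV \<gamma>" "bounded (z ` {0..})"
    and lim: "((\<lambda>t. (z t - z0) * (\<gamma> (z t) - \<gamma> z0)) \<longlongrightarrow> 0) at_top"
  shows "((\<lambda>t. \<gamma> (z t) - \<gamma> z0) \<longlongrightarrow> 0) at_top"
  unfolding tendsto_iff
proof (intro allI impI)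
  fix \<epsilon> :: real assume "\<epsilon> > 0"
  define K where "K = closure (insert z0 (z ` {0..}))"
  have "compact K" using assms(3) by (simp add: K_def compact_closure)
  then have "uniformly_continuous_on K \<gamma>"
    by (intro compact_uniformly_continuous continuous_on_subset[OF assms(2)]) auto
  then obtain d where d: "d > 0" "\<forall>x\<in>K. \<forall>y\<in>K. dist y x < d \<longrightarrow> dist (\<gamma> y) (\<gamma> x) < \<epsilon>"
    using \<open>\<epsilon> > 0\<close> unfolding uniformly_continuous_on_def by blast
  have inK: "z0 \<in> K" "z t \<in> K" if "t \<ge> 0" for t
    using that unfolding K_def by (auto intro: closure_subset[THEN subsetD])
  have "d * \<epsilon> > 0" using d \<open>\<epsilon> > 0\<close> by simp
  then have "eventually (\<lambda>t. dist ((z t - z0) * (\<gamma> (z t) - \<gamma> z0)) 0 < d * \<epsilon>) at_top"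
    by (rule tendstoD[OF lim])
  moreover have "eventually (\<lambda>t::real. t \<ge> 0) at_top" by (rule eventually_ge_at_top)
  ultimately show "eventually (\<lambda>t. dist (\<gamma> (z t) - \<gamma> z0) 0 < \<epsilon>) at_top"
  proof eventually_elim
    case (elim t)
    show ?case
    proof (rule ccontr)
      assume "\<not> ?case"
      then have ge: "\<epsilon> \<le> \<bar>\<gamma> (z t) - \<gamma> z0\<bar>" by (simp add: dist_real_def)
      then have "d \<le> \<bar>z t - z0\<bar>" using d(2) inK[OF elim(2)] by (force simp: dist_real_def)
      then have "d * \<epsilon> \<le> \<bar>z t - z0\<bar> * \<bar>\<gamma> (z t) - \<gamma> z0\<bar>"
        using ge d(1) \<open>\<epsilon> > 0\<close> by (intro mult_mono) auto
      then show False using elim(1) by (simp add: dist_real_def abs_mult)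
    qed
  qed
qed

section \<open>The closed-loop system\<close>

locale closed_loop =
  fixes n m p l pc :: nat
    and e ec :: "nat \<Rightarrow> nat \<times> nat"
    and Tx Tmu Ttheta Tphi :: "nat \<Rightarrow> real"
    and d ybar xbar q r :: "nat \<Rightarrow> real"
    and h f g gam eta :: "nat \<Rightarrow> real \<Rightarrow> real"
    and a :: "nat \<Rightarrow> nat \<Rightarrow> real"
    and c :: "nat \<Rightarrow> nat"
    and mubar thetabar phibar :: "nat \<Rightarrow> real"
    and x mu theta phi :: "real \<Rightarrow> nat \<Rightarrow> real"
    and B E Bc Ec Lcom Qm :: "nat \<Rightarrow> nat \<Rightarrow> real"
    and Psi :: "(nat \<Rightarrow> real) \<Rightarrow> nat \<Rightarrow> real"
    and dhat kappa uhat :: "nat \<Rightarrow> real"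
  assumes B_def: "B = incidence m e"
    and E_def: "E = (\<lambda>i j. if i = j \<and> j < p then 1 else 0)"
    and Bc_def: "Bc = incidence l ec"
    and Ec_def: "Ec = (\<lambda>i k. if k < pc \<and> i = c k then 1 else 0)"
    and Lcom_def: "Lcom = laplacian p a"
    and Qm_def: "Qm = (\<lambda>i j. if i = j then q i else 0)"
    and Psi_def: "Psi = (\<lambda>xv. \<lambda>i.
            - mv Bc l (\<lambda>k. gam k (mv (tr Bc) n (\<lambda>j. h j (xv j)) k)) i
            - mv Ec pc (\<lambda>k. eta (c k) (mv (tr Ec) n (\<lambda>j. h j (xv j)) k)) i)"
    and dhat_def: "dhat = (\<lambda>i. d i + mv Ec pc (\<lambda>k. eta (c k) (mv (tr Ec) n (\<lambda>j. h j (xbar j)) k)) i)"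
    and kappa_def: "kappa = mv (tr E) n (\<lambda>j. (\<Sum>k<n. dhat k + mv E p (\<lambda>i. r i / q i) k)
                                    / (\<Sum>i<p. 1 / q i))"
    and uhat_def: "uhat = (\<lambda>i. (kappa i - r i) / q i)"
    and graph: "simple_graph n m e"
    and p_pos: "1 \<le> p" and p_le: "p \<le> n"
    and Ve_zf: "zero_forcing_set n m e {..<p}"
    and T_pos: "\<forall>i<n. Tx i > 0" "\<forall>k<m. Tmu k > 0" "\<forall>i<p. Ttheta i > 0" "\<forall>i<p. Tphi i > 0"
    and h_prop: "\<forall>i<n. continuous_on UNIV (h i) \<and> strict_mono (h i)"
    and xbar_def: "\<forall>i<n. h i (xbar i) = ybar i"
    and q_pos: "\<forall>i<p. q i > 0"
    and com_graph: "weighted_digraph p a" "balanced p a" "strongly_connected p a"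
    and Bc_graph: "simple_graph n l ec"
    and c_nodes: "\<forall>k<pc. c k < n"
    and gam_prop: "\<forall>k<l. continuous_on UNIV (gam k) \<and> mono (gam k)"
    and eta_prop: "\<forall>j<pc. continuous_on UNIV (eta (c j)) \<and> mono (eta (c j))"
    and f_prop: "\<forall>k<m. continuous_on UNIV (f k) \<and> strict_mono (f k)"
    and g_prop: "\<forall>i<p. continuous_on UNIV (g i) \<and> strict_mono (g i)"
    and equilibrium:
      "\<forall>i<n. Psi xbar i - mv B m (\<lambda>k. f k (mubar k)) i + mv E p (\<lambda>k. g k (thetabar k)) i - d i = 0"
      "\<forall>k<m. mv (tr B) n (\<lambda>i. h i (xbar i) - ybar i) k = 0"
      "\<forall>i<p. - mv (tr E) n (\<lambda>j. h j (xbar j) - ybar j) i - (g i (thetabar i) - phibar i) = 0"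
      "\<forall>i<p. g i (thetabar i) - phibar i
               - mv Qm p (mv Lcom p (\<lambda>j. mv Qm p phibar j + r j)) i = 0"
    and sol_x: "\<forall>t\<ge>0. \<forall>i<n. ((\<lambda>s. x s i) has_real_derivative
        ((Psi (x t) i - mv B m (\<lambda>k. f k (mu t k)) i + mv E p (\<lambda>k. g k (theta t k)) i - d i)
          / Tx i)) (at t within {0..})"
    and sol_mu: "\<forall>t\<ge>0. \<forall>k<m. ((\<lambda>s. mu s k) has_real_derivative
        (mv (tr B) n (\<lambda>i. h i (x t i) - ybar i) k / Tmu k)) (at t within {0..})"
    and sol_theta: "\<forall>t\<ge>0. \<forall>i<p. ((\<lambda>s. theta s i) has_real_derivative
        ((- mv (tr E) n (\<lambda>j. h j (x t j) - ybar j) i - (g i (theta t i) - phi t i))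
          / Ttheta i)) (at t within {0..})"
    and sol_phi: "\<forall>t\<ge>0. \<forall>i<p. ((\<lambda>s. phi s i) has_real_derivative
        ((g i (theta t i) - phi t i - mv Qm p (mv Lcom p (\<lambda>j. mv Qm p (phi t) j + r j)) i)
          / Tphi i)) (at t within {0..})"
begin

definition x_flow :: "real \<Rightarrow> nat \<Rightarrow> real" where
  "x_flow t i = Psi (x t) i - mv B m (\<lambda>k. f k (mu t k)) i + mv E p (\<lambda>k. g k (theta t k)) i - d i"
definition mu_flow :: "real \<Rightarrow> nat \<Rightarrow> real" where
  "mu_flow t k = mv (tr B) n (\<lambda>i. h i (x t i) - ybar i) k"
definition theta_flow :: "real \<Rightarrow> nat \<Rightarrow> real" where
  "theta_flow t i = - mv (tr E) n (\<lambda>j. h j (x t j) - ybar j) i - (g i (theta t i) - phi t i)"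
definition phi_flow :: "real \<Rightarrow> nat \<Rightarrow> real" where
  "phi_flow t i = g i (theta t i) - phi t i - mv Qm p (mv Lcom p (\<lambda>j. mv Qm p (phi t) j + r j)) i"

lemma x_deriv:
  "t \<ge> 0 \<Longrightarrow> i < n \<Longrightarrow> ((\<lambda>s. x s i) has_real_derivative x_flow t i / Tx i) (at t within {0..})"
  using sol_x by (simp add: x_flow_def)
lemma mu_deriv:
  "t \<ge> 0 \<Longrightarrow> k < m \<Longrightarrow> ((\<lambda>s. mu s k) has_real_derivative mu_flow t k / Tmu k) (at t within {0..})"
  using sol_mu by (simp add: mu_flow_def)
lemma theta_deriv: "t \<ge> 0 \<Longrightarrow> i < p \<Longrightarrow>
  ((\<lambda>s. theta s i) has_real_derivative theta_flow t i / Ttheta i) (at t within {0..})"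
  using sol_theta by (simp add: theta_flow_def)
lemma phi_deriv: "t \<ge> 0 \<Longrightarrow> i < p \<Longrightarrow>
  ((\<lambda>s. phi s i) has_real_derivative phi_flow t i / Tphi i) (at t within {0..})"
  using sol_phi by (simp add: phi_flow_def)

text \<open>The equilibrium value of \<open>\<mu>\<close> is a parameter \<open>mb\<close>: the limit of \<open>\<mu>\<close> is in general
  an equilibrium value different from \<open>mubar\<close>.\<close>
definition h_err :: "real \<Rightarrow> nat \<Rightarrow> real" where
  "h_err t i = h i (x t i) - h i (xbar i)"
definition f_err :: "(nat \<Rightarrow> real) \<Rightarrow> real \<Rightarrow> nat \<Rightarrow> real" where
  "f_err mb t k = f k (mu t k) - f k (mb k)"
definition g_err :: "real \<Rightarrow> nat \<Rightarrow> real" where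
  "g_err t i = g i (theta t i) - g i (thetabar i)"
definition phi_err :: "real \<Rightarrow> nat \<Rightarrow> real" where
  "phi_err t i = phi t i - phibar i"
definition qphi_err :: "real \<Rightarrow> nat \<Rightarrow> real" where
  "qphi_err t = mv Qm p (phi_err t)"
definition Psi_err :: "real \<Rightarrow> nat \<Rightarrow> real" where
  "Psi_err t i = Psi (x t) i - Psi xbar i"

definition mu_equilibrium :: "(nat \<Rightarrow> real) \<Rightarrow> bool" where
  "mu_equilibrium mb \<longleftrightarrow>
     (\<forall>i<n. Psi xbar i - mv B m (\<lambda>k. f k (mb k)) i + mv E p (\<lambda>k. g k (thetabar k)) i - d i = 0)"

text \<open>The dissipation terms of the Lyapunov function: \<open>W1\<close> comes from the monotone coupling
  \<open>\<Psi>\<close>, \<open>W2\<close> from the damping of \<open>\<theta>\<close> towards \<open>\<phi>\<close>, \<open>W3\<close> from the Laplacian of the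
  communication graph.\<close>
definition W1 :: "real \<Rightarrow> real" where
  "W1 t = (\<Sum>k<l. mv (tr Bc) n (h_err t) k *
      (gam k (mv (tr Bc) n (\<lambda>j. h j (x t j)) k) - gam k (mv (tr Bc) n (\<lambda>j. h j (xbar j)) k)))
   + (\<Sum>k<pc. h_err t (c k) * (eta (c k) (h (c k) (x t (c k))) - eta (c k) (h (c k) (xbar (c k)))))"
definition W2 :: "real \<Rightarrow> real" where
  "W2 t = (\<Sum>i<p. (g_err t i - phi_err t i)\<^sup>2)"
definition W3 :: "real \<Rightarrow> real" where
  "W3 t = (\<Sum>i<p. qphi_err t i * mv Lcom p (qphi_err t) i)"

text \<open>The last sum is \<open>\<Sum> T\<^sub>\<phi> (\<phi> - phibar)\<^sup>2 / 2\<close>, written as a primitive of the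
  identity so that all four parts are treated alike.\<close>
definition V :: "(nat \<Rightarrow> real) \<Rightarrow> real \<Rightarrow> real" where
  "V mb t = (\<Sum>i<n. Tx i * prim (h i) (xbar i) (x t i))
   + (\<Sum>k<m. Tmu k * prim (f k) (mb k) (mu t k))
   + (\<Sum>i<p. Ttheta i * prim (g i) (thetabar i) (theta t i))
   + (\<Sum>i<p. Tphi i * prim (\<lambda>y. y) (phibar i) (phi t i))"

lemma E_mv: "mv E p v i = (if i < p then v i else 0)"
  unfolding mv_def E_def by (simp add: if_distrib[of "\<lambda>b. b * _"] sum.delta' cong: if_cong)

lemma tr_E_mv: "mv (tr E) n v i = (if i < p then v i else 0)"
  unfolding mv_def tr_def E_def using p_le by (auto simp: if_distrib[of "\<lambda>b. b * _"] sum.delta' cong: if_cong)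

lemma sum_E_mv: "(\<Sum>i<n. mv E p v i) = (\<Sum>i<p. v i)"
proof -
  have "{..<n} \<inter> {i. i < p} = {..<p}" using p_le by auto
  then show ?thesis by (simp add: E_mv sum.If_cases)
qed

lemma Qm_mv: "mv Qm p v i = (if i < p then q i * v i else 0)"
  unfolding mv_def Qm_def by (simp add: if_distrib[of "\<lambda>b. b * _"] sum.delta cong: if_cong)

lemma tr_Ec_mv: "k < pc \<Longrightarrow> mv (tr Ec) n w k = w (c k)"
  unfolding mv_def tr_def Ec_def using c_nodes by (simp add: if_distrib[of "\<lambda>b. b * _"] sum.delta' cong: if_cong)

lemma sum_mult_Ec_mv: "(\<Sum>i<n. H i * mv Ec pc v i) = (\<Sum>k<pc. v k * H (c k))"
  unfolding sum_mult_mv[of H] by (simp add: tr_Ec_mv)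

lemma sum_Ec_mv: "(\<Sum>i<n. mv Ec pc v i) = (\<Sum>k<pc. v k)"
  using sum_mult_Ec_mv[of "\<lambda>_. 1" v] by simp

lemma h_cont: "i < n \<Longrightarrow> continuous_on UNIV (h i)" using h_prop by blast
lemma h_strict_mono: "i < n \<Longrightarrow> strict_mono (h i)" using h_prop by blast
lemma f_cont: "k < m \<Longrightarrow> continuous_on UNIV (f k)" using f_prop by blast
lemma f_strict_mono: "k < m \<Longrightarrow> strict_mono (f k)" using f_prop by blast
lemma g_cont: "i < p \<Longrightarrow> continuous_on UNIV (g i)" using g_prop by blast
lemma g_strict_mono: "i < p \<Longrightarrow> strict_mono (g i)" using g_prop by blast
lemma gam_cont: "k < l \<Longrightarrow> continuous_on UNIV (gam k)" using gam_prop by blast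
lemma gam_mono: "k < l \<Longrightarrow> mono (gam k)" using gam_prop by blast
lemma eta_cont: "k < pc \<Longrightarrow> continuous_on UNIV (eta (c k))" using eta_prop by blast
lemma eta_mono: "k < pc \<Longrightarrow> mono (eta (c k))" using eta_prop by blast

lemma mu_equilibrium_mubar: "mu_equilibrium mubar"
  using equilibrium(1) by (simp add: mu_equilibrium_def)

lemma phibar_eq: "i < p \<Longrightarrow> phibar i = g i (thetabar i)"
  using equilibrium(3) xbar_def p_le by (simp add: tr_E_mv)

lemma mu_flow_eq: "mu_flow t k = mv (tr B) n (h_err t) k"
  unfolding mu_flow_def h_err_def using xbar_def by (intro mv_cong) auto

lemma mu_flow_edge: "k < m \<Longrightarrow> mu_flow t k = h_err t (fst (e k)) - h_err t (snd (e k))"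
  unfolding mu_flow_eq unfolding B_def by (rule tr_incidence_mv[OF graph])

lemma theta_flow_eq: "i < p \<Longrightarrow> theta_flow t i = - h_err t i - (g_err t i - phi_err t i)"
  unfolding theta_flow_def tr_E_mv h_err_def g_err_def phi_err_def
  using xbar_def p_le phibar_eq by auto

lemma phi_flow_eq:
  assumes "i < p"
  shows "phi_flow t i = g_err t i - phi_err t i - mv Qm p (mv Lcom p (qphi_err t)) i"
proof -
  have "mv Lcom p (\<lambda>j. mv Qm p (phi t) j + r j) k - mv Lcom p (\<lambda>j. mv Qm p phibar j + r j) k
      = mv Lcom p (qphi_err t) k" for k
    unfolding mv_diff qphi_err_def phi_err_def by (intro mv_cong) (simp add: mv_diff)
  then have "mv Qm p (mv Lcom p (\<lambda>j. mv Qm p (phi t) j + r j)) i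
      - mv Qm p (mv Lcom p (\<lambda>j. mv Qm p phibar j + r j)) i = mv Qm p (mv Lcom p (qphi_err t)) i"
    unfolding mv_diff by presburger
  then show ?thesis
    using equilibrium(4) assms unfolding phi_flow_def g_err_def phi_err_def by force
qed

lemma x_flow_eq:
  assumes "mu_equilibrium mb" "i < n"
  shows "x_flow t i = Psi_err t i - mv B m (f_err mb t) i + mv E p (g_err t) i"
proof -
  have "mv B m (\<lambda>k. f k (mu t k)) i - mv B m (\<lambda>k. f k (mb k)) i = mv B m (f_err mb t) i"
       "mv E p (\<lambda>k. g k (theta t k)) i - mv E p (\<lambda>k. g k (thetabar k)) i = mv E p (g_err t) i"
    unfolding mv_diff f_err_def g_err_def by simp_all
  then show ?thesis
    using assms unfolding mu_equilibrium_def x_flow_def Psi_err_def by fastforce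
qed

lemma Psi_err_eq:
  "Psi_err t i = - mv Bc l (\<lambda>k. gam k (mv (tr Bc) n (\<lambda>j. h j (x t j)) k)
                              - gam k (mv (tr Bc) n (\<lambda>j. h j (xbar j)) k)) i
     - mv Ec pc (\<lambda>k. eta (c k) (mv (tr Ec) n (\<lambda>j. h j (x t j)) k)
                     - eta (c k) (mv (tr Ec) n (\<lambda>j. h j (xbar j)) k)) i"
  unfolding Psi_err_def by (simp add: Psi_def mv_diff[symmetric])

lemma sum_h_err_Psi_err: "(\<Sum>i<n. h_err t i * Psi_err t i) = - W1 t"
proof -
  define GA where "GA k = gam k (mv (tr Bc) n (\<lambda>j. h j (x t j)) k)
                         - gam k (mv (tr Bc) n (\<lambda>j. h j (xbar j)) k)" for k
  define EA where "EA k = eta (c k) (mv (tr Ec) n (\<lambda>j. h j (x t j)) k)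
                         - eta (c k) (mv (tr Ec) n (\<lambda>j. h j (xbar j)) k)" for k
  have "Psi_err t i = - mv Bc l GA i - mv Ec pc EA i" for i
    unfolding Psi_err_eq GA_def EA_def ..
  then have "(\<Sum>i<n. h_err t i * Psi_err t i)
      = - (\<Sum>i<n. h_err t i * mv Bc l GA i) - (\<Sum>i<n. h_err t i * mv Ec pc EA i)"
    by (simp add: right_diff_distrib sum_subtractf sum_negf)
  also have "\<dots> = - (\<Sum>k<l. GA k * mv (tr Bc) n (h_err t) k) - (\<Sum>k<pc. EA k * h_err t (c k))"
    by (simp only: sum_mult_mv[of _ Bc] sum_mult_Ec_mv)
  also have "\<dots> = - W1 t"
    unfolding W1_def GA_def EA_def by (simp add: tr_Ec_mv mult.commute)
  finally show ?thesis .
qed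

text \<open>The incidence-matrix terms of the \<open>x\<close>- and \<open>\<mu>\<close>-equations cancel, and so do the
  \<open>h_err\<close>--\<open>g_err\<close> cross terms of the \<open>x\<close>- and \<open>\<theta>\<close>-equations.\<close>
lemma V_derivative_identity:
  assumes eq: "mu_equilibrium mb"
  shows "(\<Sum>i<n. h_err t i * x_flow t i) + (\<Sum>k<m. f_err mb t k * mu_flow t k)
         + (\<Sum>i<p. g_err t i * theta_flow t i) + (\<Sum>i<p. phi_err t i * phi_flow t i)
       = - (W1 t + W2 t + W3 t)"
proof -
  have x_part: "(\<Sum>i<n. h_err t i * x_flow t i)
      = - W1 t - (\<Sum>k<m. f_err mb t k * mu_flow t k) + (\<Sum>i<p. h_err t i * g_err t i)"
  proof -
    have "(\<Sum>i<n. h_err t i * x_flow t i) = (\<Sum>i<n. h_err t i * Psi_err t i)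
        - (\<Sum>i<n. h_err t i * mv B m (f_err mb t) i) + (\<Sum>i<n. h_err t i * mv E p (g_err t) i)"
      by (simp add: x_flow_eq[OF eq] algebra_simps sum.distrib sum_subtractf)
    moreover have "(\<Sum>i<n. h_err t i * mv E p (g_err t) i) = (\<Sum>i<p. h_err t i * g_err t i)"
      using sum_E_mv[of "\<lambda>i. h_err t i * g_err t i"] by (simp add: E_mv if_distrib cong: if_cong)
    moreover have "(\<Sum>i<n. h_err t i * mv B m (f_err mb t) i) = (\<Sum>k<m. f_err mb t k * mu_flow t k)"
      unfolding mu_flow_eq by (rule sum_mult_mv)
    ultimately show ?thesis by (simp add: sum_h_err_Psi_err)
  qed
  have theta_phi_part: "(\<Sum>i<p. h_err t i * g_err t i) + (\<Sum>i<p. g_err t i * theta_flow t i)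
      + (\<Sum>i<p. phi_err t i * phi_flow t i) = - W2 t - W3 t"
  proof -
    have "(\<Sum>i<p. phi_err t i * mv Qm p (mv Lcom p (qphi_err t)) i) = W3 t"
      unfolding W3_def qphi_err_def by (intro sum.cong refl) (simp add: Qm_mv)
    moreover have "h_err t i * g_err t i + g_err t i * (- h_err t i - (g_err t i - phi_err t i))
        + phi_err t i * (g_err t i - phi_err t i - L) = - (g_err t i - phi_err t i)\<^sup>2 - phi_err t i * L"
      for i L by (simp add: power2_eq_square algebra_simps)
    ultimately show ?thesis
      unfolding W2_def sum.distrib[symmetric]
      by (simp add: theta_flow_eq phi_flow_eq sum_subtractf sum_negf)
  qed
  show ?thesis using x_part theta_phi_part by linarith
qed

lemma W1_nonneg: "0 \<le> W1 t"
  unfolding W1_def h_err_def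
  by (intro add_nonneg_nonneg sum_nonneg) (simp_all add: mv_diff[symmetric] mono_diff_mult_nonneg gam_mono eta_mono)

lemma W2_nonneg: "0 \<le> W2 t"
  unfolding W2_def by (simp add: sum_nonneg)

lemma W3_eq: "W3 t = (\<Sum>i<p. \<Sum>j<p. a i j * (qphi_err t i - qphi_err t j)\<^sup>2) / 2"
  unfolding W3_def unfolding Lcom_def by (rule laplacian_quadratic_form[OF com_graph(2)])

lemma W3_nonneg: "0 \<le> W3 t"
  unfolding W3_eq using com_graph(1) by (auto simp: weighted_digraph_def intro!: sum_nonneg)

lemma T_nonzero: "i < n \<Longrightarrow> Tx i \<noteq> 0" "k < m \<Longrightarrow> Tmu k \<noteq> 0"
  "j < p \<Longrightarrow> Ttheta j \<noteq> 0" "j < p \<Longrightarrow> Tphi j \<noteq> 0"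
  using T_pos by force+

lemma V_deriv:
  assumes eq: "mu_equilibrium mb" and "t \<ge> 0"
  shows "(V mb has_real_derivative - (W1 t + W2 t + W3 t)) (at t within {0..})"
proof -
  have dx: "((\<lambda>s. Tx i * prim (h i) (xbar i) (x s i)) has_real_derivative h_err t i * x_flow t i)
      (at t within {0..})" if "i < n" for i
    using has_real_derivative_scaled_prim[OF x_deriv[OF \<open>t \<ge> 0\<close> that] _ h_cont[OF that]] T_pos that
    unfolding h_err_def by force
  have dmu: "((\<lambda>s. Tmu k * prim (f k) (mb k) (mu s k)) has_real_derivative f_err mb t k * mu_flow t k)
      (at t within {0..})" if "k < m" for k
    using has_real_derivative_scaled_prim[OF mu_deriv[OF \<open>t \<ge> 0\<close> that] _ f_cont[OF that]] T_pos that
    unfolding f_err_def by force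
  have dtheta: "((\<lambda>s. Ttheta i * prim (g i) (thetabar i) (theta s i)) has_real_derivative
      g_err t i * theta_flow t i) (at t within {0..})" if "i < p" for i
    using has_real_derivative_scaled_prim[OF theta_deriv[OF \<open>t \<ge> 0\<close> that] _ g_cont[OF that]] T_pos that
    unfolding g_err_def by force
  have dphi: "((\<lambda>s. Tphi i * prim (\<lambda>y. y) (phibar i) (phi s i)) has_real_derivative
      phi_err t i * phi_flow t i) (at t within {0..})" if "i < p" for i
    using has_real_derivative_scaled_prim[OF phi_deriv[OF \<open>t \<ge> 0\<close> that] _ continuous_on_id] T_pos that
    unfolding phi_err_def by force
  have "(V mb has_real_derivative (\<Sum>i<n. h_err t i * x_flow t i) + (\<Sum>k<m. f_err mb t k * mu_flow t k)
      + (\<Sum>i<p. g_err t i * theta_flow t i) + (\<Sum>i<p. phi_err t i * phi_flow t i)) (at t within {0..})"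
    unfolding V_def[abs_def] by (intro DERIV_add DERIV_sum dx dmu dtheta dphi) auto
  then show ?thesis unfolding V_derivative_identity[OF eq] .
qed

lemma V_nonincreasing:
  assumes "mu_equilibrium mb" "0 \<le> s" "s \<le> t"
  shows "V mb t \<le> V mb s"
proof (rule nonincreasing_of_deriv_nonpos[OF V_deriv[OF assms(1)] _ assms(2,3)])
  show "- (W1 t + W2 t + W3 t) \<le> 0" for t
    using W1_nonneg[of t] W2_nonneg[of t] W3_nonneg[of t] by linarith
qed

lemma V_terms_nonneg:
  "i < n \<Longrightarrow> 0 \<le> Tx i * prim (h i) (xbar i) (x t i)"
  "k < m \<Longrightarrow> 0 \<le> Tmu k * prim (f k) (mb k) (mu t k)"
  "i < p \<Longrightarrow> 0 \<le> Ttheta i * prim (g i) (thetabar i) (theta t i)"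
  "i < p \<Longrightarrow> 0 \<le> Tphi i * prim (\<lambda>y. y) (phibar i) (phi t i)"
proof -
  show "i < n \<Longrightarrow> 0 \<le> Tx i * prim (h i) (xbar i) (x t i)"
    using T_pos(1) prim_nonneg[OF h_cont strict_mono_mono[OF h_strict_mono]] by (simp add: less_imp_le)
  show "k < m \<Longrightarrow> 0 \<le> Tmu k * prim (f k) (mb k) (mu t k)"
    using T_pos(2) prim_nonneg[OF f_cont strict_mono_mono[OF f_strict_mono]] by (simp add: less_imp_le)
  show "i < p \<Longrightarrow> 0 \<le> Ttheta i * prim (g i) (thetabar i) (theta t i)"
    using T_pos(3) prim_nonneg[OF g_cont strict_mono_mono[OF g_strict_mono]] by (simp add: less_imp_le)
  show "i < p \<Longrightarrow> 0 \<le> Tphi i * prim (\<lambda>y. y) (phibar i) (phi t i)"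
    using T_pos(4) prim_nonneg[OF continuous_on_id, where a="phibar i" and s="phi t i"]
    by (simp add: less_imp_le mono_def)
qed

lemma V_nonneg: "0 \<le> V mb t"
  unfolding V_def by (intro add_nonneg_nonneg sum_nonneg V_terms_nonneg) auto

lemma V_ge_terms:
  "i < n \<Longrightarrow> Tx i * prim (h i) (xbar i) (x t i) \<le> V mb t"
  "k < m \<Longrightarrow> Tmu k * prim (f k) (mb k) (mu t k) \<le> V mb t"
  "i < p \<Longrightarrow> Ttheta i * prim (g i) (thetabar i) (theta t i) \<le> V mb t"
  "i < p \<Longrightarrow> Tphi i * prim (\<lambda>y. y) (phibar i) (phi t i) \<le> V mb t"
proof -
  let ?Sx = "\<Sum>i<n. Tx i * prim (h i) (xbar i) (x t i)"
  let ?Smu = "\<Sum>k<m. Tmu k * prim (f k) (mb k) (mu t k)"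
  let ?Sth = "\<Sum>i<p. Ttheta i * prim (g i) (thetabar i) (theta t i)"
  let ?Sph = "\<Sum>i<p. Tphi i * prim (\<lambda>y. y) (phibar i) (phi t i)"
  have V: "V mb t = ?Sx + ?Smu + ?Sth + ?Sph" by (simp add: V_def)
  have S: "0 \<le> ?Sx" "0 \<le> ?Smu" "0 \<le> ?Sth" "0 \<le> ?Sph"
    by (intro sum_nonneg V_terms_nonneg; simp)+
  show "i < n \<Longrightarrow> Tx i * prim (h i) (xbar i) (x t i) \<le> V mb t"
    using member_le_sum[of i "{..<n}" "\<lambda>i. Tx i * prim (h i) (xbar i) (x t i)"] V S V_terms_nonneg(1)
    by fastforce
  show "k < m \<Longrightarrow> Tmu k * prim (f k) (mb k) (mu t k) \<le> V mb t"
    using member_le_sum[of k "{..<m}" "\<lambda>k. Tmu k * prim (f k) (mb k) (mu t k)"] V S V_terms_nonneg(2)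
    by fastforce
  show "i < p \<Longrightarrow> Ttheta i * prim (g i) (thetabar i) (theta t i) \<le> V mb t"
    using member_le_sum[of i "{..<p}" "\<lambda>i. Ttheta i * prim (g i) (thetabar i) (theta t i)"] V S
      V_terms_nonneg(3) by fastforce
  show "i < p \<Longrightarrow> Tphi i * prim (\<lambda>y. y) (phibar i) (phi t i) \<le> V mb t"
    using member_le_sum[of i "{..<p}" "\<lambda>i. Tphi i * prim (\<lambda>y. y) (phibar i) (phi t i)"] V S
      V_terms_nonneg(4) by fastforce
qed

lemma V_le_initial: "t \<ge> 0 \<Longrightarrow> V mubar t \<le> V mubar 0"
  by (rule V_nonincreasing[OF mu_equilibrium_mubar]) auto

lemma bounded_x:
  assumes "i < n"
  shows "bounded ((\<lambda>t. x t i) ` {0..})"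
proof (rule bounded_of_prim_le[OF h_cont[OF assms] h_strict_mono[OF assms]])
  show "Tx i > 0" using T_pos(1) assms by blast
  show "Tx i * prim (h i) (xbar i) (x t i) \<le> V mubar 0" if "t \<ge> 0" for t
    using V_ge_terms(1)[OF assms, where t=t and mb=mubar] V_le_initial[OF that] by linarith
qed

lemma bounded_mu:
  assumes "k < m"
  shows "bounded ((\<lambda>t. mu t k) ` {0..})"
proof (rule bounded_of_prim_le[OF f_cont[OF assms] f_strict_mono[OF assms]])
  show "Tmu k > 0" using T_pos(2) assms by blast
  show "Tmu k * prim (f k) (mubar k) (mu t k) \<le> V mubar 0" if "t \<ge> 0" for t
    using V_ge_terms(2)[OF assms, where t=t and mb=mubar] V_le_initial[OF that] by linarith
qed

lemma bounded_theta:
  assumes "i < p"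
  shows "bounded ((\<lambda>t. theta t i) ` {0..})"
proof (rule bounded_of_prim_le[OF g_cont[OF assms] g_strict_mono[OF assms]])
  show "Ttheta i > 0" using T_pos(3) assms by blast
  show "Ttheta i * prim (g i) (thetabar i) (theta t i) \<le> V mubar 0" if "t \<ge> 0" for t
    using V_ge_terms(3)[OF assms, where t=t and mb=mubar] V_le_initial[OF that] by linarith
qed

lemma bounded_phi:
  assumes "i < p"
  shows "bounded ((\<lambda>t. phi t i) ` {0..})"
proof (rule bounded_of_prim_le[OF continuous_on_id])
  show "strict_mono (\<lambda>y::real. y)" by (simp add: strict_mono_def)
  show "Tphi i > 0" using T_pos(4) assms by blast
  show "Tphi i * prim (\<lambda>y. y) (phibar i) (phi t i) \<le> V mubar 0" if "t \<ge> 0" for t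
    using V_ge_terms(4)[OF assms, where t=t and mb=mubar] V_le_initial[OF that] by linarith
qed

end

text \<open>Boundedness and regularity on \<open>[0, \<infinity>)\<close> are both closed under the algebraic operations and
  under composition with continuous maps. Once they hold for the state, this locale propagates them
  to every signal built from it.\<close>
locale closed_loop_signals = closed_loop +
  fixes P :: "(real \<Rightarrow> real) \<Rightarrow> bool"
  assumes P_const: "\<And>b. P (\<lambda>t. b)"
    and P_add: "\<And>u v. P u \<Longrightarrow> P v \<Longrightarrow> P (\<lambda>t. u t + v t)"
    and P_mult: "\<And>u v. P u \<Longrightarrow> P v \<Longrightarrow> P (\<lambda>t. u t * v t)"
    and P_compose: "\<And>\<phi> u. continuous_on UNIV \<phi> \<Longrightarrow> P u \<Longrightarrow> P (\<lambda>t. \<phi> (u t))"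
    and P_x: "\<And>i. i < n \<Longrightarrow> P (\<lambda>t. x t i)"
    and P_mu: "\<And>k. k < m \<Longrightarrow> P (\<lambda>t. mu t k)"
    and P_theta: "\<And>i. i < p \<Longrightarrow> P (\<lambda>t. theta t i)"
    and P_phi: "\<And>i. i < p \<Longrightarrow> P (\<lambda>t. phi t i)"
begin

lemma P_uminus: "P u \<Longrightarrow> P (\<lambda>t. - u t)"
  using P_mult[OF P_const[of "-1"], of u] by simp

lemma P_diff: "P u \<Longrightarrow> P v \<Longrightarrow> P (\<lambda>t. u t - v t)"
  using P_add[OF _ P_uminus, of u v] by simp

lemma P_cmult: "P u \<Longrightarrow> P (\<lambda>t. b * u t)"
  using P_mult[OF P_const[of b], of u] by simp

lemma P_divide: "P u \<Longrightarrow> P (\<lambda>t. u t / b)"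
  using P_mult[OF _ P_const[of "1 / b"], of u] by simp

lemma P_sum: "(\<And>i. i \<in> A \<Longrightarrow> P (F i)) \<Longrightarrow> P (\<lambda>t. \<Sum>i\<in>A. F i t)"
  by (induction A rule: infinite_finite_induct) (auto simp: P_const intro!: P_add)

lemma P_mv: "(\<And>j. j < k \<Longrightarrow> P (\<lambda>t. v t j)) \<Longrightarrow> P (\<lambda>t. mv A k (v t) i)"
  unfolding mv_def by (intro P_sum P_cmult) auto

lemma P_h_x: "i < n \<Longrightarrow> P (\<lambda>t. h i (x t i))"
  by (intro P_compose[OF h_cont] P_x)

lemma P_tr_h_x: "P (\<lambda>t. mv (tr A) n (\<lambda>j. h j (x t j)) k)"
  by (intro P_mv P_h_x)

lemma P_Psi: "P (\<lambda>t. Psi (x t) i)"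
  unfolding Psi_def
  by (intro P_diff P_uminus P_mv P_compose[OF gam_cont] P_compose[OF eta_cont] P_tr_h_x)

lemma P_x_flow: "P (\<lambda>t. x_flow t i)"
  unfolding x_flow_def
  by (intro P_diff P_add P_Psi P_mv P_compose[OF f_cont] P_compose[OF g_cont] P_mu P_theta P_const)

lemma P_mu_flow: "P (\<lambda>t. mu_flow t k)"
  unfolding mu_flow_def by (intro P_mv P_diff P_h_x P_const)

lemma P_theta_flow: "i < p \<Longrightarrow> P (\<lambda>t. theta_flow t i)"
  unfolding theta_flow_def
  by (intro P_diff P_uminus P_mv P_h_x P_compose[OF g_cont] P_theta P_phi P_const)

lemma P_phi_flow: "i < p \<Longrightarrow> P (\<lambda>t. phi_flow t i)"
  unfolding phi_flow_def
  by (intro P_diff P_mv P_add P_compose[OF g_cont] P_theta P_phi P_const)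

lemma P_h_err: "i < n \<Longrightarrow> P (\<lambda>t. h_err t i)"
  unfolding h_err_def by (intro P_diff P_h_x P_const)

lemma P_g_err: "i < p \<Longrightarrow> P (\<lambda>t. g_err t i)"
  unfolding g_err_def by (intro P_diff P_compose[OF g_cont] P_theta P_const)

lemma P_phi_err: "i < p \<Longrightarrow> P (\<lambda>t. phi_err t i)"
  unfolding phi_err_def by (intro P_diff P_phi P_const)

lemma P_W1: "P W1"
  unfolding W1_def[abs_def] using c_nodes
  by (intro P_add P_sum P_mult P_mv P_h_err P_diff P_compose[OF gam_cont] P_compose[OF eta_cont]
      P_tr_h_x P_h_x P_const) auto

lemma P_W2: "P W2"
  unfolding W2_def[abs_def] power2_eq_square by (intro P_sum P_mult P_diff P_g_err P_phi_err) auto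

lemma P_W3: "P W3"
  unfolding W3_def[abs_def] qphi_err_def by (intro P_sum P_mult P_mv P_phi_err) auto

end

sublocale closed_loop \<subseteq> bdd: closed_loop_signals n m p l pc e ec Tx Tmu Ttheta Tphi d ybar xbar q r
  h f g gam eta a c mubar thetabar phibar x mu theta phi B E Bc Ec Lcom Qm Psi dhat kappa uhat
  "\<lambda>u. bounded (u ` {0..})"
  by unfold_locales
    (auto simp: image_constant_conv bounded_plus_comp bounded_image_mult bounded_image_compose
      bounded_x bounded_mu bounded_theta bounded_phi)

context closed_loop begin

lemma regular_x: "i < n \<Longrightarrow> regular_on {0..} (\<lambda>t. x t i)"
  by (rule regular_on_has_derivative[OF convex_real_interval(1) x_deriv])
    (auto intro: bounded_x bdd.P_divide[OF bdd.P_x_flow])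

lemma regular_mu: "k < m \<Longrightarrow> regular_on {0..} (\<lambda>t. mu t k)"
  by (rule regular_on_has_derivative[OF convex_real_interval(1) mu_deriv])
    (auto intro: bounded_mu bdd.P_divide[OF bdd.P_mu_flow])

lemma regular_theta: "i < p \<Longrightarrow> regular_on {0..} (\<lambda>t. theta t i)"
  by (rule regular_on_has_derivative[OF convex_real_interval(1) theta_deriv])
    (auto intro: bounded_theta bdd.P_divide[OF bdd.P_theta_flow])

lemma regular_phi: "i < p \<Longrightarrow> regular_on {0..} (\<lambda>t. phi t i)"
  by (rule regular_on_has_derivative[OF convex_real_interval(1) phi_deriv])
    (auto intro: bounded_phi bdd.P_divide[OF bdd.P_phi_flow])

end

sublocale closed_loop \<subseteq> reg: closed_loop_signals n m p l pc e ec Tx Tmu Ttheta Tphi d ybar xbar q r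
  h f g gam eta a c mubar thetabar phibar x mu theta phi B E Bc Ec Lcom Qm Psi dhat kappa uhat
  "regular_on {0..}"
  by unfold_locales
    (auto simp: regular_on_const regular_on_add regular_on_mult regular_on_compose
      regular_x regular_mu regular_theta regular_phi)

section \<open>Convergence\<close>

context closed_loop begin

lemma W_tendsto_zero: "((\<lambda>t. W1 t + W2 t + W3 t) \<longlongrightarrow> 0) at_top"
proof -
  have "slowly_varying (V mubar)"
    using V_nonincreasing[OF mu_equilibrium_mubar] V_nonneg by (rule slowly_varying_nonincreasing)
  moreover have "uniformly_continuous_on {0..} (\<lambda>t. - (W1 t + W2 t + W3 t))"
    using reg.P_uminus[OF reg.P_add[OF reg.P_add[OF reg.P_W1 reg.P_W2] reg.P_W3]]
    by (simp add: regular_on_def)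
  ultimately have "((\<lambda>t. - (W1 t + W2 t + W3 t)) \<longlongrightarrow> 0) at_top"
    by (intro deriv_tendsto_zero_of_slowly_varying[OF V_deriv[OF mu_equilibrium_mubar]])
  from tendsto_minus[OF this] show ?thesis by (simp only: minus_minus minus_zero)
qed

lemma W1_tendsto_zero: "(W1 \<longlongrightarrow> 0) at_top"
  using W1_nonneg W2_nonneg W3_nonneg
  by (intro tendsto_zero_sandwich[OF _ _ W_tendsto_zero]) (auto intro: add_increasing2)

lemma W2_tendsto_zero: "(W2 \<longlongrightarrow> 0) at_top"
proof (rule tendsto_zero_sandwich[OF W2_nonneg _ W_tendsto_zero])
  show "W2 t \<le> W1 t + W2 t + W3 t" for t using W1_nonneg[of t] W3_nonneg[of t] by linarith
qed

lemma W3_tendsto_zero: "(W3 \<longlongrightarrow> 0) at_top"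
proof (rule tendsto_zero_sandwich[OF W3_nonneg _ W_tendsto_zero])
  show "W3 t \<le> W1 t + W2 t + W3 t" for t using W1_nonneg[of t] W2_nonneg[of t] by linarith
qed

lemma g_phi_err_tendsto_zero:
  assumes "i < p"
  shows "((\<lambda>t. g_err t i - phi_err t i) \<longlongrightarrow> 0) at_top"
proof (rule tendsto_zero_of_square, rule tendsto_zero_sandwich[OF _ _ W2_tendsto_zero])
  show "(g_err t i - phi_err t i)\<^sup>2 \<le> W2 t" for t
    unfolding W2_def using assms by (intro member_le_sum) auto
qed simp

lemma qphi_err_consensus:
  assumes "i < p" "j < p"
  shows "((\<lambda>t. qphi_err t i - qphi_err t j) \<longlongrightarrow> 0) at_top"
proof (rule tendsto_consensus_of_laplacian_energy[OF com_graph(1,3) _ assms])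
  show "((\<lambda>t. \<Sum>i<p. \<Sum>j<p. a i j * (qphi_err t i - qphi_err t j)\<^sup>2) \<longlongrightarrow> 0) at_top"
    using tendsto_mult_right_zero[OF W3_tendsto_zero, of 2] by (simp add: W3_eq)
qed

lemma phi_flow_tendsto_zero:
  assumes "i < p"
  shows "((\<lambda>t. phi_flow t i) \<longlongrightarrow> 0) at_top"
proof -
  have "((\<lambda>t. mv Lcom p (qphi_err t) j) \<longlongrightarrow> 0) at_top" if "j < p" for j
  proof -
    have "((\<lambda>t. \<Sum>k<p. a j k * (qphi_err t j - qphi_err t k)) \<longlongrightarrow> (\<Sum>k<p. a j k * 0)) at_top"
      using qphi_err_consensus that by (intro tendsto_sum tendsto_mult tendsto_const) auto
    then show ?thesis unfolding Lcom_def using laplacian_mv[OF that] by simp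
  qed
  then have "((\<lambda>t. mv Qm p (mv Lcom p (qphi_err t)) i) \<longlongrightarrow> mv Qm p (\<lambda>_. 0) i) at_top"
    by (intro tendsto_mv)
  from tendsto_diff[OF g_phi_err_tendsto_zero[OF assms] this]
  show ?thesis by (simp add: phi_flow_eq[OF assms] mv_def)
qed

lemma gam_err_tendsto_zero:
  assumes "k < l"
  shows "((\<lambda>t. gam k (mv (tr Bc) n (\<lambda>j. h j (x t j)) k) - gam k (mv (tr Bc) n (\<lambda>j. h j (xbar j)) k))
          \<longlongrightarrow> 0) at_top"
proof -
  let ?z = "\<lambda>t. mv (tr Bc) n (\<lambda>j. h j (x t j)) k" and ?z0 = "mv (tr Bc) n (\<lambda>j. h j (xbar j)) k"
  let ?w = "\<lambda>t k. (mv (tr Bc) n (\<lambda>j. h j (x t j)) k - mv (tr Bc) n (\<lambda>j. h j (xbar j)) k)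
      * (gam k (mv (tr Bc) n (\<lambda>j. h j (x t j)) k) - gam k (mv (tr Bc) n (\<lambda>j. h j (xbar j)) k))"
  have w_nonneg: "0 \<le> ?w t k" if "k < l" for t k
    using mono_diff_mult_nonneg[OF gam_mono[OF that]] by blast
  have le: "?w t k \<le> W1 t" for t
  proof -
    have "?w t k \<le> (\<Sum>k<l. ?w t k)" using assms w_nonneg by (intro member_le_sum) auto
    moreover have "0 \<le> (\<Sum>k<pc. h_err t (c k) * (eta (c k) (h (c k) (x t (c k)))
        - eta (c k) (h (c k) (xbar (c k)))))"
      unfolding h_err_def by (intro sum_nonneg mono_diff_mult_nonneg eta_mono) simp
    ultimately show ?thesis unfolding W1_def h_err_def mv_diff by linarith
  qed
  have "((\<lambda>t. ?w t k) \<longlongrightarrow> 0) at_top"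
    by (rule tendsto_zero_sandwich[OF w_nonneg[OF assms] le W1_tendsto_zero])
  then show ?thesis
    by (rule tendsto_mono_diff_of_product[OF gam_mono[OF assms] gam_cont[OF assms] bdd.P_tr_h_x])
qed

lemma eta_err_tendsto_zero:
  assumes "k < pc"
  shows "((\<lambda>t. eta (c k) (h (c k) (x t (c k))) - eta (c k) (h (c k) (xbar (c k)))) \<longlongrightarrow> 0) at_top"
proof -
  let ?w = "\<lambda>t k. h_err t (c k) * (eta (c k) (h (c k) (x t (c k))) - eta (c k) (h (c k) (xbar (c k))))"
  have w_nonneg: "0 \<le> ?w t k" if "k < pc" for t k
    unfolding h_err_def by (rule mono_diff_mult_nonneg[OF eta_mono[OF that]])
  have le: "?w t k \<le> W1 t" for t
  proof -
    have "?w t k \<le> (\<Sum>k<pc. ?w t k)" using assms w_nonneg by (intro member_le_sum) auto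
    moreover have "0 \<le> (\<Sum>k<l. mv (tr Bc) n (h_err t) k * (gam k (mv (tr Bc) n (\<lambda>j. h j (x t j)) k)
        - gam k (mv (tr Bc) n (\<lambda>j. h j (xbar j)) k)))"
      unfolding h_err_def mv_diff[symmetric] by (intro sum_nonneg mono_diff_mult_nonneg gam_mono) simp
    ultimately show ?thesis unfolding W1_def by linarith
  qed
  have "((\<lambda>t. ?w t k) \<longlongrightarrow> 0) at_top"
    by (rule tendsto_zero_sandwich[OF w_nonneg[OF assms] le W1_tendsto_zero])
  then show ?thesis unfolding h_err_def
    by (rule tendsto_mono_diff_of_product[OF eta_mono[OF assms] eta_cont[OF assms]
          bdd.P_h_x[OF c_nodes[rule_format, OF assms]]])
qed

lemma Psi_err_tendsto_zero: "((\<lambda>t. Psi_err t i) \<longlongrightarrow> 0) at_top"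
proof -
  have eta_lim: "((\<lambda>t. eta (c k) (mv (tr Ec) n (\<lambda>j. h j (x t j)) k)
      - eta (c k) (mv (tr Ec) n (\<lambda>j. h j (xbar j)) k)) \<longlongrightarrow> 0) at_top" if "k < pc" for k
    using eta_err_tendsto_zero[OF that] by (simp add: tr_Ec_mv[OF that])
  have "((\<lambda>t. - mv Bc l (\<lambda>k. gam k (mv (tr Bc) n (\<lambda>j. h j (x t j)) k)
        - gam k (mv (tr Bc) n (\<lambda>j. h j (xbar j)) k)) i
      - mv Ec pc (\<lambda>k. eta (c k) (mv (tr Ec) n (\<lambda>j. h j (x t j)) k)
        - eta (c k) (mv (tr Ec) n (\<lambda>j. h j (xbar j)) k)) i) \<longlongrightarrow> - mv Bc l (\<lambda>_. 0) i - mv Ec pc (\<lambda>_. 0) i) at_top"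
    by (intro tendsto_diff tendsto_minus tendsto_mv gam_err_tendsto_zero eta_lim)
  then show ?thesis unfolding Psi_err_eq by (simp add: mv_def)
qed

lemma g_err_slowly_varying:
  assumes "i < p"
  shows "slowly_varying (\<lambda>t. g_err t i)"
proof -
  have "slowly_varying (\<lambda>t. phi t i)"
    by (rule slowly_varying_of_deriv_tendsto_zero[OF phi_deriv[OF _ assms]
          tendsto_divide_zero[OF phi_flow_tendsto_zero[OF assms]]])
  then have "slowly_varying (\<lambda>t. (g_err t i - phi_err t i) + (phi t i - phibar i))"
    by (intro slowly_varying_add slowly_varying_diff slowly_varying_const
        tendsto_imp_slowly_varying[OF g_phi_err_tendsto_zero[OF assms]])
  then show ?thesis by (simp add: phi_err_def)
qed

lemma theta_flow_tendsto_zero: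
  assumes "i < p"
  shows "((\<lambda>t. theta_flow t i) \<longlongrightarrow> 0) at_top"
proof -
  have "slowly_varying (\<lambda>t. g_err t i + g i (thetabar i))"
    by (intro slowly_varying_add slowly_varying_const g_err_slowly_varying[OF assms])
  then have "slowly_varying (\<lambda>t. theta t i)"
    by (intro slowly_varying_cancel_strict_mono[OF g_strict_mono[OF assms] g_cont[OF assms]
          bounded_theta[OF assms]]) (simp add: g_err_def)
  then have "((\<lambda>t. theta_flow t i / Ttheta i) \<longlongrightarrow> 0) at_top"
    using reg.P_divide[OF reg.P_theta_flow[OF assms]]
    by (intro deriv_tendsto_zero_of_slowly_varying[OF theta_deriv[OF _ assms]]) (simp_all add: regular_on_def)
  then show ?thesis using tendsto_divide_zero_iff T_nonzero assms by blast
qed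

lemma h_err_tendsto_zero_input:
  assumes "i < p"
  shows "((\<lambda>t. h_err t i) \<longlongrightarrow> 0) at_top"
  using tendsto_diff[OF tendsto_minus[OF theta_flow_tendsto_zero[OF assms]] g_phi_err_tendsto_zero[OF assms]]
  by (simp add: theta_flow_eq[OF assms])

lemma x_tendsto_of_h_err:
  assumes "i < n" "((\<lambda>t. h_err t i) \<longlongrightarrow> 0) at_top"
  shows "((\<lambda>t. x t i) \<longlongrightarrow> xbar i) at_top"
proof -
  have "((\<lambda>t. h i (x t i)) \<longlongrightarrow> h i (xbar i)) at_top"
    using assms(2) by (simp add: h_err_def LIM_zero_iff)
  then show ?thesis by (rule tendsto_cancel_strict_mono[OF h_strict_mono[OF assms(1)]])
qed

lemma x_flow_tendsto_zero_of_h_err: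
  assumes "i < n" "((\<lambda>t. h_err t i) \<longlongrightarrow> 0) at_top"
  shows "((\<lambda>t. x_flow t i) \<longlongrightarrow> 0) at_top"
proof -
  have "((\<lambda>t. x_flow t i / Tx i) \<longlongrightarrow> 0) at_top"
    using reg.P_divide[OF reg.P_x_flow] tendsto_imp_slowly_varying[OF x_tendsto_of_h_err[OF assms]]
    by (intro deriv_tendsto_zero_of_slowly_varying[OF x_deriv[OF _ assms(1)]]) (simp_all add: regular_on_def)
  then show ?thesis using tendsto_divide_zero_iff T_nonzero assms by blast
qed

text \<open>The flow of \<open>\<mu>\<^sub>k\<close> is the output difference along edge \<open>k\<close>. One direction integrates
  the flow; the other is Barbalat's lemma.\<close>
lemma mu_flow_tendsto_zero_iff:
  assumes "k < m"
  shows "((\<lambda>t. mu_flow t k) \<longlongrightarrow> 0) at_top \<longleftrightarrow> slowly_varying (\<lambda>t. f_err mubar t k)"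
proof
  assume "((\<lambda>t. mu_flow t k) \<longlongrightarrow> 0) at_top"
  from slowly_varying_of_deriv_tendsto_zero[OF mu_deriv[OF _ assms] tendsto_divide_zero[OF this]]
  have "slowly_varying (\<lambda>t. mu t k)" .
  then show "slowly_varying (\<lambda>t. f_err mubar t k)" unfolding f_err_def
    by (intro slowly_varying_diff slowly_varying_const
        slowly_varying_compose[OF f_cont[OF assms] bounded_mu[OF assms]])
next
  assume "slowly_varying (\<lambda>t. f_err mubar t k)"
  then have "slowly_varying (\<lambda>t. f_err mubar t k + f k (mubar k))"
    by (intro slowly_varying_add slowly_varying_const)
  then have "slowly_varying (\<lambda>t. mu t k)" unfolding f_err_def
    by (intro slowly_varying_cancel_strict_mono[OF f_strict_mono[OF assms] f_cont[OF assms] bounded_mu[OF assms]])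
      simp
  then have "((\<lambda>t. mu_flow t k / Tmu k) \<longlongrightarrow> 0) at_top"
    using reg.P_divide[OF reg.P_mu_flow]
    by (intro deriv_tendsto_zero_of_slowly_varying[OF mu_deriv[OF _ assms]]) (simp_all add: regular_on_def)
  then show "((\<lambda>t. mu_flow t k) \<longlongrightarrow> 0) at_top" using tendsto_divide_zero_iff T_nonzero assms by blast
qed

lemma slowly_varying_B_f_err:
  assumes "u < n" "((\<lambda>t. h_err t u) \<longlongrightarrow> 0) at_top"
  shows "slowly_varying (\<lambda>t. mv B m (f_err mubar t) u)"
proof -
  have "slowly_varying (\<lambda>t. mv E p (g_err t) u)"
    by (cases "u < p") (simp_all add: E_mv slowly_varying_const g_err_slowly_varying)
  moreover have "mv B m (f_err mubar t) u = Psi_err t u + mv E p (g_err t) u - x_flow t u" for t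
    using x_flow_eq[OF mu_equilibrium_mubar assms(1), of t] by simp
  moreover have "slowly_varying (\<lambda>t. Psi_err t u)"
    by (rule tendsto_imp_slowly_varying[OF Psi_err_tendsto_zero])
  moreover have "slowly_varying (\<lambda>t. x_flow t u)"
    by (rule tendsto_imp_slowly_varying[OF x_flow_tendsto_zero_of_h_err[OF assms]])
  ultimately show ?thesis by (simp add: slowly_varying_diff slowly_varying_add)
qed

lemma edge_endpoints: "k < m \<Longrightarrow> fst (e k) < n \<and> snd (e k) < n \<and> fst (e k) \<noteq> snd (e k)"
  using graph unfolding simple_graph_def by blast

lemma slowly_varying_incident_f_err:
  assumes "k < m" and hu: "((\<lambda>t. h_err t u) \<longlongrightarrow> 0) at_top"
    and hw: "\<And>w. {u, w} = {fst (e k), snd (e k)} \<Longrightarrow> ((\<lambda>t. h_err t w) \<longlongrightarrow> 0) at_top"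
  shows "slowly_varying (\<lambda>t. B u k * f_err mubar t k)"
proof (cases "u = fst (e k) \<or> u = snd (e k)")
  case True
  define w where "w = (if u = fst (e k) then snd (e k) else fst (e k))"
  have "{u, w} = {fst (e k), snd (e k)}" using True by (auto simp: w_def)
  then have "((\<lambda>t. h_err t w) \<longlongrightarrow> 0) at_top" by (rule hw)
  moreover have "fst (e k) \<in> {u, w}" "snd (e k) \<in> {u, w}" using True by (auto simp: w_def)
  ultimately have "((\<lambda>t. h_err t (fst (e k))) \<longlongrightarrow> 0) at_top" "((\<lambda>t. h_err t (snd (e k))) \<longlongrightarrow> 0) at_top"
    using hu by auto
  from tendsto_diff[OF this] have "((\<lambda>t. mu_flow t k) \<longlongrightarrow> 0) at_top"
    by (simp add: mu_flow_edge[OF assms(1)])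
  then show ?thesis using mu_flow_tendsto_zero_iff[OF assms(1)] by (simp add: slowly_varying_cmult)
next
  case False
  then have "B u k = 0" unfolding B_def incidence_def by auto
  then show ?thesis by (simp add: slowly_varying_const)
qed

text \<open>One step of the zero forcing rule: the flow equation of \<open>x\<^sub>u\<close> forces the single remaining
  unknown edge term, and hence the output of \<open>v\<close>, to settle.\<close>
lemma h_err_tendsto_zero_force:
  assumes "adj m e u v" and hu: "((\<lambda>t. h_err t u) \<longlongrightarrow> 0) at_top"
    and others: "\<And>w. adj m e u w \<Longrightarrow> w \<noteq> v \<Longrightarrow> ((\<lambda>t. h_err t w) \<longlongrightarrow> 0) at_top"
  shows "((\<lambda>t. h_err t v) \<longlongrightarrow> 0) at_top"
proof -
  obtain k0 where k0: "k0 < m" "{u, v} = {fst (e k0), snd (e k0)}"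
    using assms(1) unfolding adj_def by blast
  have "u < n" "u \<noteq> v" using edge_endpoints[OF k0(1)] k0(2) by (auto simp: doubleton_eq_iff)
  have "slowly_varying (\<lambda>t. B u k * f_err mubar t k)" if "k < m" "k \<noteq> k0" for k
  proof (rule slowly_varying_incident_f_err[OF that(1) hu])
    fix w assume uw: "{u, w} = {fst (e k), snd (e k)}"
    have "w \<noteq> v"
    proof
      assume "w = v"
      then have "{fst (e k), snd (e k)} = {fst (e k0), snd (e k0)}" using uw k0(2) by simp
      with graph that k0(1) show False unfolding simple_graph_def by blast
    qed
    moreover have "adj m e u w" using uw that unfolding adj_def by blast
    ultimately show "((\<lambda>t. h_err t w) \<longlongrightarrow> 0) at_top" by (rule others[rotated])
  qed
  then have "slowly_varying (\<lambda>t. mv B m (f_err mubar t) u - (\<Sum>k\<in>{..<m} - {k0}. B u k * f_err mubar t k))"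
    by (intro slowly_varying_diff slowly_varying_B_f_err[OF \<open>u < n\<close> hu] slowly_varying_sum) auto
  moreover have "mv B m (f_err mubar t) u - (\<Sum>k\<in>{..<m} - {k0}. B u k * f_err mubar t k)
      = B u k0 * f_err mubar t k0" for t
    unfolding mv_def using k0(1) by (simp add: sum.remove)
  ultimately have "slowly_varying (\<lambda>t. B u k0 * (B u k0 * f_err mubar t k0))"
    by (simp add: slowly_varying_cmult)
  moreover have "B u k0 * B u k0 = 1"
    using k0 \<open>u \<noteq> v\<close> unfolding B_def incidence_def by (auto simp: doubleton_eq_iff)
  ultimately have "((\<lambda>t. mu_flow t k0) \<longlongrightarrow> 0) at_top"
    using mu_flow_tendsto_zero_iff[OF k0(1)] by (simp add: mult.assoc[symmetric])
  then have edge: "((\<lambda>t. h_err t (fst (e k0)) - h_err t (snd (e k0))) \<longlongrightarrow> 0) at_top"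
    by (simp add: mu_flow_edge[OF k0(1)])
  from k0(2) \<open>u \<noteq> v\<close> consider "u = fst (e k0)" "v = snd (e k0)" | "u = snd (e k0)" "v = fst (e k0)"
    by (auto simp: doubleton_eq_iff)
  then show ?thesis
  proof cases
    case 1
    with tendsto_diff[OF hu edge] show ?thesis by simp
  next
    case 2
    with tendsto_add[OF edge hu] show ?thesis by simp
  qed
qed

lemma h_err_tendsto_zero:
  assumes "i < n"
  shows "((\<lambda>t. h_err t i) \<longlongrightarrow> 0) at_top"
proof -
  have "zf_black n m e {..<p} i" using Ve_zf assms by (simp add: zero_forcing_set_def)
  then show ?thesis
  proof (induction rule: zf_black.induct)
    case (init v)
    then show ?case by (simp add: h_err_tendsto_zero_input)
  next
    case (force u v)
    show ?case
    proof (rule h_err_tendsto_zero_force[OF force.hyps(2) force.IH(1)])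
      show "((\<lambda>t. h_err t w) \<longlongrightarrow> 0) at_top" if "adj m e u w" "w \<noteq> v" for w
        using force.IH(2) that by blast
    qed
  qed
qed

lemma x_tendsto: "i < n \<Longrightarrow> ((\<lambda>t. x t i) \<longlongrightarrow> xbar i) at_top"
  by (rule x_tendsto_of_h_err[OF _ h_err_tendsto_zero])

lemma x_flow_tendsto_zero: "i < n \<Longrightarrow> ((\<lambda>t. x_flow t i) \<longlongrightarrow> 0) at_top"
  by (rule x_flow_tendsto_zero_of_h_err[OF _ h_err_tendsto_zero])

lemma sum_x_flow: "(\<Sum>i<n. x_flow t i) = (\<Sum>i<n. Psi_err t i) + (\<Sum>i<p. g_err t i)"
proof -
  have "(\<Sum>i<n. x_flow t i) = (\<Sum>i<n. Psi_err t i) - (\<Sum>i<n. mv B m (f_err mubar t) i)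
      + (\<Sum>i<n. mv E p (g_err t) i)"
    by (simp add: x_flow_eq[OF mu_equilibrium_mubar] sum.distrib sum_subtractf)
  then show ?thesis unfolding B_def by (simp add: sum_incidence_mv[OF graph] sum_E_mv)
qed

lemma sum_g_err_tendsto_zero: "((\<lambda>t. \<Sum>i<p. g_err t i) \<longlongrightarrow> 0) at_top"
proof -
  have "((\<lambda>t. (\<Sum>i<n. x_flow t i) - (\<Sum>i<n. Psi_err t i)) \<longlongrightarrow> (\<Sum>i<n. 0) - (\<Sum>i<n. 0)) at_top"
    by (intro tendsto_diff tendsto_sum x_flow_tendsto_zero Psi_err_tendsto_zero) auto
  then show ?thesis by (simp add: sum_x_flow)
qed

text \<open>Consensus of \<open>Q \<phi>\<close> leaves one common value \<open>\<zeta>\<close>; the total input \<open>\<Sum> g_err\<close> tends to zero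
  and equals \<open>\<zeta> \<Sum> 1/q\<^sub>i\<close> up to vanishing terms, so \<open>\<zeta>\<close> vanishes as well.\<close>
lemma phi_err_tendsto_zero:
  assumes "i < p"
  shows "((\<lambda>t. phi_err t i) \<longlongrightarrow> 0) at_top"
proof -
  have "0 < p" using p_pos by simp
  define \<zeta> where "\<zeta> t = qphi_err t 0" for t
  define S where "S = (\<Sum>i<p. 1 / q i)"
  have "S > 0" unfolding S_def using q_pos \<open>0 < p\<close> by (intro sum_pos) auto
  have close: "((\<lambda>t. phi_err t j - \<zeta> t / q j) \<longlongrightarrow> 0) at_top" if "j < p" for j
  proof -
    have "((\<lambda>t. (qphi_err t j - qphi_err t 0) / q j) \<longlongrightarrow> 0) at_top"
      using qphi_err_consensus[OF that \<open>0 < p\<close>] by (rule tendsto_divide_zero)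
    moreover have "(qphi_err t j - qphi_err t 0) / q j = phi_err t j - \<zeta> t / q j" for t
    proof -
      have "q j > 0" using q_pos that by blast
      then show ?thesis using \<open>0 < p\<close> that by (simp add: qphi_err_def Qm_mv \<zeta>_def diff_divide_distrib)
    qed
    ultimately show ?thesis by simp
  qed
  have "(\<Sum>i<p. g_err t i) - (\<Sum>i<p. (g_err t i - phi_err t i) + (phi_err t i - \<zeta> t / q i)) = \<zeta> t * S" for t
    unfolding S_def by (simp add: sum_subtractf[symmetric] sum_distrib_left)
  moreover have "((\<lambda>t. (\<Sum>i<p. g_err t i) - (\<Sum>i<p. (g_err t i - phi_err t i) + (phi_err t i - \<zeta> t / q i)))
      \<longlongrightarrow> 0 - (\<Sum>i<p. 0 + 0)) at_top"
    by (intro tendsto_diff sum_g_err_tendsto_zero tendsto_sum tendsto_add g_phi_err_tendsto_zero close) auto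
  ultimately have "((\<lambda>t. \<zeta> t * S) \<longlongrightarrow> 0) at_top" by simp
  then have "((\<lambda>t. \<zeta> t * S / S / q i) \<longlongrightarrow> 0) at_top" by (intro tendsto_divide_zero)
  then have "((\<lambda>t. \<zeta> t / q i) \<longlongrightarrow> 0) at_top" using \<open>S > 0\<close> by simp
  from tendsto_add[OF close[OF assms] this] show ?thesis by simp
qed

lemma phi_tendsto: "i < p \<Longrightarrow> ((\<lambda>t. phi t i) \<longlongrightarrow> phibar i) at_top"
  using phi_err_tendsto_zero by (simp add: phi_err_def LIM_zero_iff)

lemma g_err_tendsto_zero: "i < p \<Longrightarrow> ((\<lambda>t. g_err t i) \<longlongrightarrow> 0) at_top"
  using tendsto_add[OF g_phi_err_tendsto_zero phi_err_tendsto_zero, of i i] by simp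

lemma theta_tendsto:
  assumes "i < p"
  shows "((\<lambda>t. theta t i) \<longlongrightarrow> thetabar i) at_top"
proof (rule tendsto_cancel_strict_mono[OF g_strict_mono[OF assms]])
  show "((\<lambda>t. g i (theta t i)) \<longlongrightarrow> g i (thetabar i)) at_top"
    using g_err_tendsto_zero[OF assms] by (simp add: g_err_def LIM_zero_iff)
qed

lemma B_f_err_tendsto_zero:
  assumes "i < n"
  shows "((\<lambda>t. mv B m (f_err mubar t) i) \<longlongrightarrow> 0) at_top"
proof -
  have "((\<lambda>t. mv E p (g_err t) i) \<longlongrightarrow> 0) at_top"
    by (cases "i < p") (simp_all add: E_mv g_err_tendsto_zero)
  from tendsto_diff[OF tendsto_add[OF Psi_err_tendsto_zero[of i] this] x_flow_tendsto_zero[OF assms]]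
  show ?thesis by (simp add: x_flow_eq[OF mu_equilibrium_mubar assms])
qed

lemma mu_convergent_along_seq:
  "\<exists>ts L. filterlim ts at_top sequentially \<and> (\<forall>j. ts j \<ge> 0) \<and> (\<forall>k<m. (\<lambda>j. mu (ts j) k) \<longlonglongrightarrow> L k)"
proof -
  have "Bseq (\<lambda>j. mu (real j) k)" if "k < m" for k
    using bounded_mu[OF that] unfolding Bseq_def bounded_pos by fastforce
  then obtain r L where "strict_mono r" "\<forall>k<m. (\<lambda>j. mu (real (r j)) k) \<longlonglongrightarrow> L k"
    using bounded_seqs_convergent_subseq[of m "\<lambda>j k. mu (real j) k"] by blast
  moreover have "filterlim (\<lambda>j. real (r j)) at_top sequentially"
    using filterlim_compose[OF filterlim_real_sequentially filterlim_subseq[OF \<open>strict_mono r\<close>]] .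
  ultimately show ?thesis by (intro exI[of _ "\<lambda>j. real (r j)"] exI[of _ L]) auto
qed

lemma limit_mu_equilibrium:
  assumes ts: "filterlim ts at_top sequentially" and L: "\<forall>k<m. (\<lambda>j. mu (ts j) k) \<longlonglongrightarrow> L k"
  shows "\<forall>i<n. mv B m (\<lambda>k. f k (L k) - f k (mubar k)) i = 0" and "mu_equilibrium L"
proof -
  show BL: "\<forall>i<n. mv B m (\<lambda>k. f k (L k) - f k (mubar k)) i = 0"
  proof (intro allI impI)
    fix i assume "i < n"
    have "(\<lambda>j. mv B m (f_err mubar (ts j)) i) \<longlonglongrightarrow> 0"
      by (rule filterlim_compose[OF B_f_err_tendsto_zero[OF \<open>i < n\<close>] ts])
    moreover have "(\<lambda>j. mv B m (f_err mubar (ts j)) i) \<longlonglongrightarrow> mv B m (\<lambda>k. f k (L k) - f k (mubar k)) i"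
      unfolding f_err_def using L
      by (intro tendsto_mv tendsto_diff continuous_on_tendsto_compose[OF f_cont] tendsto_const) auto
    ultimately show "mv B m (\<lambda>k. f k (L k) - f k (mubar k)) i = 0" using LIMSEQ_unique by blast
  qed
  show "mu_equilibrium L"
    using mu_equilibrium_mubar BL by (simp add: mu_equilibrium_def mv_diff[symmetric])
qed

lemma V_limit_tendsto_zero:
  assumes ts: "filterlim ts at_top sequentially" and L: "\<forall>k<m. (\<lambda>j. mu (ts j) k) \<longlonglongrightarrow> L k"
  shows "(\<lambda>j. V L (ts j)) \<longlonglongrightarrow> 0"
proof -
  have "(\<lambda>j. V L (ts j)) \<longlonglongrightarrow>
      (\<Sum>i<n. Tx i * prim (h i) (xbar i) (xbar i)) + (\<Sum>k<m. Tmu k * prim (f k) (L k) (L k))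
      + (\<Sum>i<p. Ttheta i * prim (g i) (thetabar i) (thetabar i))
      + (\<Sum>i<p. Tphi i * prim (\<lambda>y. y) (phibar i) (phibar i))"
    unfolding V_def using L
    by (intro tendsto_add tendsto_sum tendsto_mult tendsto_const
        continuous_on_tendsto_compose[OF continuous_on_prim[OF h_cont]]
        continuous_on_tendsto_compose[OF continuous_on_prim[OF f_cont]]
        continuous_on_tendsto_compose[OF continuous_on_prim[OF g_cont]]
        continuous_on_tendsto_compose[OF continuous_on_prim[OF continuous_on_id]]
        filterlim_compose[OF x_tendsto ts] filterlim_compose[OF theta_tendsto ts]
        filterlim_compose[OF phi_tendsto ts]) auto
  then show ?thesis by (simp add: prim_self h_cont f_cont g_cont continuous_on_id)
qed

lemma mu_convergent:
  "\<exists>L. (\<forall>k<m. ((\<lambda>t. mu t k) \<longlongrightarrow> L k) at_top)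
     \<and> (\<forall>i<n. mv B m (\<lambda>k. f k (L k) - f k (mubar k)) i = 0)"
proof -
  obtain ts L where ts: "filterlim ts at_top sequentially" "\<And>j. ts j \<ge> 0"
    and L: "\<forall>k<m. (\<lambda>j. mu (ts j) k) \<longlonglongrightarrow> L k"
    using mu_convergent_along_seq by blast
  note eq = limit_mu_equilibrium[OF ts(1) L]
  have V: "(V L \<longlongrightarrow> 0) at_top"
    using V_nonincreasing[OF eq(2)] ts V_limit_tendsto_zero[OF ts(1) L]
    by (rule nonincreasing_tendsto_of_seq)
  have "((\<lambda>t. mu t k) \<longlongrightarrow> L k) at_top" if "k < m" for k
  proof (rule tendsto_of_prim_tendsto_zero[OF f_cont[OF that] f_strict_mono[OF that]])
    have "((\<lambda>t. Tmu k * prim (f k) (L k) (mu t k)) \<longlongrightarrow> 0) at_top"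
      using V_terms_nonneg(2)[OF that] V_ge_terms(2)[OF that] by (rule tendsto_zero_sandwich[OF _ _ V])
    then show "((\<lambda>t. prim (f k) (L k) (mu t k)) \<longlongrightarrow> 0) at_top"
      using tendsto_mult_left_zero[of _ _ "1 / Tmu k"] T_nonzero(2)[OF that] by fastforce
  qed
  then show ?thesis using eq(1) by blast
qed

text \<open>At equilibrium \<open>Q phibar + r\<close> lies in the kernel of the communication Laplacian.\<close>
lemma Q_phibar_r_consensus:
  assumes "i < p" "j < p"
  shows "q i * phibar i + r i = q j * phibar j + r j"
proof -
  have kernel: "mv (laplacian p a) p (\<lambda>j. mv Qm p phibar j + r j) k = 0" if "k < p" for k
  proof -
    have "q k * mv Lcom p (\<lambda>j. mv Qm p phibar j + r j) k = 0"
      using equilibrium(4)[rule_format, OF that] phibar_eq[OF that] that by (simp add: Qm_mv)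
    moreover have "q k \<noteq> 0" using q_pos that by force
    ultimately show ?thesis by (simp add: Lcom_def)
  qed
  from laplacian_kernel_consensus[OF com_graph kernel assms]
  show ?thesis using assms by (simp add: Qm_mv)
qed

lemma g_thetabar_uhat:
  assumes "i < p"
  shows "g i (thetabar i) = uhat i"
proof -
  have "0 < p" using p_pos by simp
  define \<kappa> where "\<kappa> = q 0 * phibar 0 + r 0"
  define S where "S = (\<Sum>i<p. 1 / q i)"
  have "S > 0" unfolding S_def using q_pos \<open>0 < p\<close> by (intro sum_pos) auto
  have g: "g j (thetabar j) = (\<kappa> - r j) / q j" if "j < p" for j
  proof -
    have "q j > 0" using q_pos that by blast
    then show ?thesis using Q_phibar_r_consensus[OF that \<open>0 < p\<close>] phibar_eq[OF that]
      by (simp add: \<kappa>_def field_simps)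
  qed
  have "(\<Sum>i<n. Psi xbar i) = - (\<Sum>k<pc. eta (c k) (mv (tr Ec) n (\<lambda>j. h j (xbar j)) k))"
    unfolding Psi_def Bc_def
    by (simp add: sum_subtractf sum_negf sum_incidence_mv[OF Bc_graph] sum_Ec_mv)
  moreover have "(\<Sum>i<n. Psi xbar i - mv B m (\<lambda>k. f k (mubar k)) i
      + mv E p (\<lambda>k. g k (thetabar k)) i - d i) = 0"
    using equilibrium(1) by simp
  ultimately have "(\<Sum>i<p. g i (thetabar i))
      = (\<Sum>i<n. d i) + (\<Sum>k<pc. eta (c k) (mv (tr Ec) n (\<lambda>j. h j (xbar j)) k))"
    unfolding B_def by (simp add: sum.distrib sum_subtractf sum_incidence_mv[OF graph] sum_E_mv)
  moreover have "(\<Sum>i<p. g i (thetabar i)) = \<kappa> * S - (\<Sum>i<p. r i / q i)"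
    unfolding S_def by (simp add: g diff_divide_distrib sum_subtractf sum_distrib_left)
  ultimately have "(\<Sum>k<n. dhat k + mv E p (\<lambda>i. r i / q i) k) = \<kappa> * S"
    unfolding dhat_def by (simp add: sum.distrib sum_Ec_mv sum_E_mv)
  then have "kappa i = \<kappa>" unfolding kappa_def tr_E_mv using assms \<open>S > 0\<close> by (simp add: S_def)
  then show ?thesis using g[OF assms] by (simp add: uhat_def)
qed

end

theorem corollary1:
  fixes n m p l pc :: nat
    and e ec :: "nat \<Rightarrow> nat \<times> nat"
    and Tx Tmu Ttheta Tphi :: "nat \<Rightarrow> real"
    and d ybar xbar q r :: "nat \<Rightarrow> real"
    and h f g gam eta :: "nat \<Rightarrow> real \<Rightarrow> real"
    and a :: "nat \<Rightarrow> nat \<Rightarrow> real"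
    and c :: "nat \<Rightarrow> nat"
    and lamm lamp um up :: "nat \<Rightarrow> ereal"
    and mubar thetabar phibar :: "nat \<Rightarrow> real"
    and x mu theta phi :: "real \<Rightarrow> nat \<Rightarrow> real"
    and B E Bc Ec Lcom Qm :: "nat \<Rightarrow> nat \<Rightarrow> real"
    and Psi :: "(nat \<Rightarrow> real) \<Rightarrow> nat \<Rightarrow> real"
    and dhat kappa uhat :: "nat \<Rightarrow> real"
  defines "B \<equiv> incidence m e"
    and "E \<equiv> (\<lambda>i j. if i = j \<and> j < p then 1 else 0)"
    and "Bc \<equiv> incidence l ec"
    and "Ec \<equiv> (\<lambda>i k. if k < pc \<and> i = c k then 1 else 0)"
    and "Lcom \<equiv> laplacian p a"
    and "Qm \<equiv> (\<lambda>i j. if i = j then q i else 0)"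
    and "Psi \<equiv> (\<lambda>xv. \<lambda>i.
            - mv Bc l (\<lambda>k. gam k (mv (tr Bc) n (\<lambda>j. h j (xv j)) k)) i
            - mv Ec pc (\<lambda>k. eta (c k) (mv (tr Ec) n (\<lambda>j. h j (xv j)) k)) i)"
    and "dhat \<equiv> (\<lambda>i. d i + mv Ec pc (\<lambda>k. eta (c k) (mv (tr Ec) n (\<lambda>j. h j (xbar j)) k)) i)"
    and "kappa \<equiv> mv (tr E) n (\<lambda>j. (\<Sum>k<n. dhat k + mv E p (\<lambda>i. r i / q i) k)
                                    / (\<Sum>i<p. 1 / q i))"
    and "uhat \<equiv> (\<lambda>i. (kappa i - r i) / q i)"
  assumes graph: "simple_graph n m e" "graph_connected n m e"
    and p_pos: "1 \<le> p" and p_le: "p \<le> n"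
    and Ve_zf: "zero_forcing_set n m e {..<p}"
    and T_pos: "\<forall>i<n. Tx i > 0" "\<forall>k<m. Tmu k > 0" "\<forall>i<p. Ttheta i > 0" "\<forall>i<p. Tphi i > 0"
    and h_prop: "\<forall>i<n. C1 (h i) \<and> strict_mono (h i)"
    and ybar_range: "\<forall>i<n. ybar i \<in> range (h i)"
    and xbar_def: "\<forall>i<n. h i (xbar i) = ybar i"
    and q_pos: "\<forall>i<p. q i > 0"
    and com_graph: "weighted_digraph p a" "balanced p a" "strongly_connected p a"
    and Bc_graph: "simple_graph n l ec"
    and c_nodes: "inj_on c {..<pc}" "\<forall>k<pc. c k < n"
    and gam_prop: "\<forall>k<l. C1 (gam k) \<and> mono (gam k)"
    and eta_prop: "\<forall>j<pc. C1 (eta (c j)) \<and> mono (eta (c j))"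
    and f_prop: "\<forall>k<m. C1 (f k) \<and> strict_mono (f k) \<and> lamm k < lamp k \<and>
                    range (f k) = {v. lamm k < ereal v \<and> ereal v < lamp k}"
    and g_prop: "\<forall>i<p. C1 (g i) \<and> strict_mono (g i) \<and> um i < up i \<and>
                    range (g i) = {v. um i < ereal v \<and> ereal v < up i}"
    and omega_ex: "\<exists>\<omega>. \<forall>k<m.
           mv (pinv n m B) n (\<lambda>i. Psi xbar i + mv E p uhat i - d i) k
           + (\<omega> k - mv (mm (pinv n m B) n B) m \<omega> k) \<in> range (f k)"
    and uhat_range: "\<forall>i<p. uhat i \<in> range (g i)"
    and Vs_zf: "zero_forcing_set n m e
                  ({..<p} \<union> {c j |j. j < pc \<and> deriv (eta (c j)) (h (c j) (xbar (c j))) > 0})"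
    and equilibrium:
      "\<forall>i<n. Psi xbar i - mv B m (\<lambda>k. f k (mubar k)) i + mv E p (\<lambda>k. g k (thetabar k)) i - d i = 0"
      "\<forall>k<m. mv (tr B) n (\<lambda>i. h i (xbar i) - ybar i) k = 0"
      "\<forall>i<p. - mv (tr E) n (\<lambda>j. h j (xbar j) - ybar j) i - (g i (thetabar i) - phibar i) = 0"
      "\<forall>i<p. g i (thetabar i) - phibar i
               - mv Qm p (mv Lcom p (\<lambda>j. mv Qm p phibar j + r j)) i = 0"
    and sol_x: "\<forall>t\<ge>0. \<forall>i<n. ((\<lambda>s. x s i) has_real_derivative
        ((Psi (x t) i - mv B m (\<lambda>k. f k (mu t k)) i + mv E p (\<lambda>k. g k (theta t k)) i - d i)
          / Tx i)) (at t within {0..})"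
    and sol_mu: "\<forall>t\<ge>0. \<forall>k<m. ((\<lambda>s. mu s k) has_real_derivative
        (mv (tr B) n (\<lambda>i. h i (x t i) - ybar i) k / Tmu k)) (at t within {0..})"
    and sol_theta: "\<forall>t\<ge>0. \<forall>i<p. ((\<lambda>s. theta s i) has_real_derivative
        ((- mv (tr E) n (\<lambda>j. h j (x t j) - ybar j) i - (g i (theta t i) - phi t i))
          / Ttheta i)) (at t within {0..})"
    and sol_phi: "\<forall>t\<ge>0. \<forall>i<p. ((\<lambda>s. phi s i) has_real_derivative
        ((g i (theta t i) - phi t i - mv Qm p (mv Lcom p (\<lambda>j. mv Qm p (phi t) j + r j)) i)
          / Tphi i)) (at t within {0..})"
  shows "\<exists>xs mus thetas phis.
           (\<forall>i<n. ((\<lambda>t. x t i) \<longlongrightarrow> xs i) at_top) \<and>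
           (\<forall>k<m. ((\<lambda>t. mu t k) \<longlongrightarrow> mus k) at_top) \<and>
           (\<forall>i<p. ((\<lambda>t. theta t i) \<longlongrightarrow> thetas i) at_top) \<and>
           (\<forall>i<p. ((\<lambda>t. phi t i) \<longlongrightarrow> phis i) at_top) \<and>
           (\<forall>i<n. mv B m (\<lambda>k. f k (mus k) - f k (mubar k)) i = 0) \<and>
           (\<forall>i<n. xs i = xbar i) \<and> (\<forall>i<p. thetas i = thetabar i) \<and> (\<forall>i<p. phis i = phibar i) \<and>
           (\<forall>k<m. ((\<lambda>t. f k (mu t k)) \<longlongrightarrow> f k (mus k)) at_top) \<and>
           (\<forall>i<n. h i (xs i) = ybar i) \<and>
           (\<forall>i<p. g i (thetas i) = uhat i)"
proof -
  have cont: "continuous_on UNIV \<phi>" if "C1 \<phi>" for \<phi>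
    using that unfolding C1_def
    by (meson continuous_at_imp_continuous_on differentiable_imp_continuous_within)
  interpret closed_loop n m p l pc e ec Tx Tmu Ttheta Tphi d ybar xbar q r h f g gam eta a c
    mubar thetabar phibar x mu theta phi B E Bc Ec Lcom Qm Psi dhat kappa uhat
    using graph(1) p_pos p_le Ve_zf T_pos h_prop xbar_def q_pos com_graph Bc_graph c_nodes(2)
      gam_prop eta_prop f_prop g_prop equilibrium sol_x sol_mu sol_theta sol_phi
    by unfold_locales
      (simp_all add: cont B_def E_def Bc_def Ec_def Lcom_def Qm_def Psi_def dhat_def kappa_def uhat_def)
  \<comment> \<open>The hypotheses on ranges and on \<open>\<omega>\<close> secure the existence of the equilibrium in the paper;
    here it is given. The zero forcing hypothesis on \<open>V\<^sub>e \<union> V\<^sub>s\<close> follows from the one on \<open>V\<^sub>e\<close>.\<close>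
  obtain L where L: "\<forall>k<m. ((\<lambda>t. mu t k) \<longlongrightarrow> L k) at_top"
    "\<forall>i<n. mv B m (\<lambda>k. f k (L k) - f k (mubar k)) i = 0"
    using mu_convergent by blast
  have "\<forall>k<m. ((\<lambda>t. f k (mu t k)) \<longlongrightarrow> f k (L k)) at_top"
    using L(1) by (auto intro: continuous_on_tendsto_compose[OF f_cont])
  then show ?thesis
    using x_tendsto L theta_tendsto phi_tendsto xbar_def g_thetabar_uhat
    by (intro exI[of _ xbar] exI[of _ L] exI[of _ thetabar] exI[of _ phibar]) auto
qed

end
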